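(* Let $(G,D,\star)$ be a probabilistic metric space where $\star$ is a continuous triangle function. Then $(\Pi(G),\mathbb D,\star)$ is a completion of $G$: it is complete, $\delta:G\to\Pi(G)$ is an isometric embedding ($\mathbb D(\delta_a,\delta_b)=D(a,b)$) with dense image, and if $(X,\Lambda,\star)$ is any complete probabilistic metric space with an isometric map $\varphi:G\to X$ whose image is dense, then there is a bijective isometry $T:\Pi(G)\to X$ with $T\circ\delta=\varphi$. If moreover $(G,\cdot,D,\star)$ is an invariant probabilistic metric group, then $(\Pi(G),\odot,\mathbb D,\star)$ is its invariant probabilistic metric group completion: $\delta$ is in addition an injective group homomorphism, and if $(X,\Lambda,\star)$ is a complete invariant probabilistic metric group and $\varphi$ an isometric group homomorphism with dense image, then $T$ above is an isometric group isomorphism.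
   Context: A distribution function is a nondecreasing, left-continuous function $F:[-\infty,+\infty]\to[0,1]$ with $F(-\infty)=0$, $F(+\infty)=1$; $\Delta^+$ is the set of distribution functions with $F(0)=0$, ordered pointwise (a complete lattice with maximum $\mathcal H_0$, $\mathcal H_0(t)=0$ for $t\le0$, $1$ for $t>0$). A triangle function is a binary operation $\star$ on $\Delta^+$ that is commutative, associative, nondecreasing in each argument, with $F\star\mathcal H_0=F$. $F_n\xrightarrow{w}F$ means $F_n(t)\to F(t)$ at every continuity point $t\in\mathbb R$ of $F$; $\star$ is continuous if $F_n\star L_n\xrightarrow{w}F\star L$ whenever $F_n\xrightarrow{w}F$, $L_n\xrightarrow{w}L$. A probabilistic metric space $(G,D,\star)$ consists of a set $G$, a triangle function $\star$ and $D:G\times G\to\Delta^+$ with (i) $D(p,q)=\mathcal H_0$ iff $p=q$; (ii) $D(p,q)=D(q,p)$; (iii) $D(p,q)\star D(q,r)\le D(p,r)$. If $(G,\cdot)$ is a group and $D(pr,qr)=D(rp,rq)=D(p,q)$ for all $p,q,r$, it is an invariant probabilistic metric group. A sequence $(z_n)$ is Cauchy if $D(z_n,z_p)\xrightarrow{w}\mathcal H_0$ as $n,p\to\infty$; completeness means every Cauchy sequence has a point $z$ with $D(z_n,z)\xrightarrow{w}\mathcal H_0$. A subset $S$ is dense if every point is the limit (distance $\xrightarrow{w}\mathcal H_0$) of a sequence in $S$. A map $\varphi$ is isometric if it preserves the probabilistic distances. A map $f:G\to\Delta^+$ is probabilistic $1$-Lipschitz if $D(x,y)\star f(y)\le f(x)$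 for all $x,y$. $\delta_a(y)=D(y,a)$. $\Pi(G)$ is the set of probabilistic $1$-Lipschitz maps $f$ for which there is a Cauchy sequence $(a_n)\subset G$ with $D(a_n,x)\xrightarrow{w}f(x)$ for all $x$. $\mathbb D(f,g)=\sup_{x\in G}f(x)\star g(x)$ for $f,g\in\Pi(G)$. For maps $f,g:G\to\Delta^+$, $(f\odot g)(x)=\sup_{y,z\in G,\ yz=x}f(y)\star g(z)$. *)

theory Defs
  imports Complex_Main "HOL-Library.Extended_Real" "HOL-Algebra.Group"
begin

type_synonym dfun = "ereal \<Rightarrow> real"

definition distfun :: "dfun \<Rightarrow> bool" where
  "distfun F \<longleftrightarrow> mono F \<and> (\<forall>t. 0 \<le> F t \<and> F t \<le> 1)
     \<and> (\<forall>x::real. continuous (at_left (ereal x)) F)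
     \<and> F (-\<infinity>) = 0 \<and> F \<infinity> = 1"

definition Delta_plus :: "dfun set" where
  "Delta_plus = {F. distfun F \<and> F 0 = 0}"

definition H0 :: dfun where
  "H0 = (\<lambda>t. if t \<le> 0 then 0 else 1)"

text \<open>Supremum in the complete lattice Delta_plus (pointwise supremum; the bottom
  element for the empty family).\<close>
definition dsup :: "dfun set \<Rightarrow> dfun" where
  "dsup A = (\<lambda>t. if t = \<infinity> then 1 else Sup (insert 0 ((\<lambda>F. F t) ` A)))"

definition triangle_function :: "(dfun \<Rightarrow> dfun \<Rightarrow> dfun) \<Rightarrow> bool" where
  "triangle_function tf \<longleftrightarrow>
     (\<forall>F\<in>Delta_plus. \<forall>L\<in>Delta_plus. tf F L \<in> Delta_plus)
   \<and> (\<forall>F\<in>Delta_plus. \<forall>L\<in>Delta_plus. tf F L = tf L F)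
   \<and> (\<forall>F\<in>Delta_plus. \<forall>L\<in>Delta_plus. \<forall>M\<in>Delta_plus. tf (tf F L) M = tf F (tf L M))
   \<and> (\<forall>F\<in>Delta_plus. \<forall>F'\<in>Delta_plus. \<forall>L\<in>Delta_plus. F \<le> F' \<longrightarrow> tf F L \<le> tf F' L)
   \<and> (\<forall>F\<in>Delta_plus. \<forall>L\<in>Delta_plus. \<forall>L'\<in>Delta_plus. L \<le> L' \<longrightarrow> tf F L \<le> tf F L')
   \<and> (\<forall>F\<in>Delta_plus. tf F H0 = F)"

definition wconv :: "(nat \<Rightarrow> dfun) \<Rightarrow> dfun \<Rightarrow> bool" where
  "wconv Fs F \<longleftrightarrow> (\<forall>t::real. isCont (\<lambda>x. F (ereal x)) t \<longrightarrow>
       (\<lambda>n. Fs n (ereal t)) \<longlonglongrightarrow> F (ereal t))"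

definition continuous_tf :: "(dfun \<Rightarrow> dfun \<Rightarrow> dfun) \<Rightarrow> bool" where
  "continuous_tf tf \<longleftrightarrow> (\<forall>Fs F Ls L. (\<forall>n. Fs n \<in> Delta_plus) \<and> (\<forall>n. Ls n \<in> Delta_plus)
       \<and> F \<in> Delta_plus \<and> L \<in> Delta_plus \<and> wconv Fs F \<and> wconv Ls L
       \<longrightarrow> wconv (\<lambda>n. tf (Fs n) (Ls n)) (tf F L))"

definition pm_space :: "'a set \<Rightarrow> ('a \<Rightarrow> 'a \<Rightarrow> dfun) \<Rightarrow> (dfun \<Rightarrow> dfun \<Rightarrow> dfun) \<Rightarrow> bool" where
  "pm_space S D tf \<longleftrightarrow> triangle_function tf
     \<and> (\<forall>p\<in>S. \<forall>q\<in>S. D p q \<in> Delta_plus)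
     \<and> (\<forall>p\<in>S. \<forall>q\<in>S. D p q = H0 \<longleftrightarrow> p = q)
     \<and> (\<forall>p\<in>S. \<forall>q\<in>S. D p q = D q p)
     \<and> (\<forall>p\<in>S. \<forall>q\<in>S. \<forall>r\<in>S. tf (D p q) (D q r) \<le> D p r)"

definition pm_cauchy :: "('a \<Rightarrow> 'a \<Rightarrow> dfun) \<Rightarrow> (nat \<Rightarrow> 'a) \<Rightarrow> bool" where
  "pm_cauchy D z \<longleftrightarrow> (\<forall>t::real. isCont (\<lambda>x. H0 (ereal x)) t \<longrightarrow>
     (\<forall>e>0. \<exists>N. \<forall>n\<ge>N. \<forall>p\<ge>N. \<bar>D (z n) (z p) (ereal t) - H0 (ereal t)\<bar> < e))"

definition pm_converges :: "('a \<Rightarrow> 'a \<Rightarrow> dfun) \<Rightarrow> (nat \<Rightarrow> 'a) \<Rightarrow> 'a \<Rightarrow> bool" where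
  "pm_converges D z a \<longleftrightarrow> wconv (\<lambda>n. D (z n) a) H0"

definition pm_complete :: "'a set \<Rightarrow> ('a \<Rightarrow> 'a \<Rightarrow> dfun) \<Rightarrow> bool" where
  "pm_complete S D \<longleftrightarrow> (\<forall>z. range z \<subseteq> S \<and> pm_cauchy D z \<longrightarrow> (\<exists>a\<in>S. pm_converges D z a))"

definition pm_dense :: "'a set \<Rightarrow> ('a \<Rightarrow> 'a \<Rightarrow> dfun) \<Rightarrow> 'a set \<Rightarrow> bool" where
  "pm_dense S D A \<longleftrightarrow> A \<subseteq> S \<and> (\<forall>x\<in>S. \<exists>z. range z \<subseteq> A \<and> pm_converges D z x)"

definition isometric :: "'a set \<Rightarrow> ('a \<Rightarrow> 'a \<Rightarrow> dfun) \<Rightarrow> ('b \<Rightarrow> 'b \<Rightarrow> dfun) \<Rightarrow> ('a \<Rightarrow> 'b) \<Rightarrow> bool" where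
  "isometric S D L \<phi> \<longleftrightarrow> (\<forall>a\<in>S. \<forall>b\<in>S. L (\<phi> a) (\<phi> b) = D a b)"

definition prob_lipschitz ::
  "'a set \<Rightarrow> ('a \<Rightarrow> 'a \<Rightarrow> dfun) \<Rightarrow> (dfun \<Rightarrow> dfun \<Rightarrow> dfun) \<Rightarrow> ('a \<Rightarrow> dfun) \<Rightarrow> bool" where
  "prob_lipschitz S D tf f \<longleftrightarrow> (\<forall>x\<in>S. f x \<in> Delta_plus)
     \<and> (\<forall>x\<in>S. \<forall>y\<in>S. tf (D x y) (f y) \<le> f x)"

definition PiG :: "'a set \<Rightarrow> ('a \<Rightarrow> 'a \<Rightarrow> dfun) \<Rightarrow> (dfun \<Rightarrow> dfun \<Rightarrow> dfun) \<Rightarrow> ('a \<Rightarrow> dfun) set" where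
  "PiG S D tf = {f. (\<forall>x. x \<notin> S \<longrightarrow> f x = undefined) \<and> prob_lipschitz S D tf f
      \<and> (\<exists>a. range a \<subseteq> S \<and> pm_cauchy D a \<and> (\<forall>x\<in>S. wconv (\<lambda>n. D (a n) x) (f x)))}"

definition delta :: "'a set \<Rightarrow> ('a \<Rightarrow> 'a \<Rightarrow> dfun) \<Rightarrow> 'a \<Rightarrow> ('a \<Rightarrow> dfun)" where
  "delta S D a = (\<lambda>y. if y \<in> S then D y a else undefined)"

definition DD :: "'a set \<Rightarrow> (dfun \<Rightarrow> dfun \<Rightarrow> dfun) \<Rightarrow> ('a \<Rightarrow> dfun) \<Rightarrow> ('a \<Rightarrow> dfun) \<Rightarrow> dfun" where
  "DD S tf f g = dsup {tf (f x) (g x) | x. x \<in> S}"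

definition odot :: "('a, 'm) monoid_scheme \<Rightarrow> (dfun \<Rightarrow> dfun \<Rightarrow> dfun)
                    \<Rightarrow> ('a \<Rightarrow> dfun) \<Rightarrow> ('a \<Rightarrow> dfun) \<Rightarrow> ('a \<Rightarrow> dfun)" where
  "odot G tf f g = (\<lambda>x. if x \<in> carrier G then
      dsup {tf (f y) (g z) | y z. y \<in> carrier G \<and> z \<in> carrier G \<and> y \<otimes>\<^bsub>G\<^esub> z = x}
    else undefined)"

definition pm_group :: "('a, 'm) monoid_scheme \<Rightarrow> ('a \<Rightarrow> 'a \<Rightarrow> dfun) \<Rightarrow> (dfun \<Rightarrow> dfun \<Rightarrow> dfun) \<Rightarrow> bool" where
  "pm_group G D tf \<longleftrightarrow> group G \<and> pm_space (carrier G) D tf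
     \<and> (\<forall>p\<in>carrier G. \<forall>q\<in>carrier G. \<forall>r\<in>carrier G.
          D (p \<otimes>\<^bsub>G\<^esub> r) (q \<otimes>\<^bsub>G\<^esub> r) = D p q \<and> D (r \<otimes>\<^bsub>G\<^esub> p) (r \<otimes>\<^bsub>G\<^esub> q) = D p q)"

definition PiGroup :: "('a, 'm) monoid_scheme \<Rightarrow> ('a \<Rightarrow> 'a \<Rightarrow> dfun) \<Rightarrow> (dfun \<Rightarrow> dfun \<Rightarrow> dfun)
                       \<Rightarrow> ('a \<Rightarrow> dfun) monoid" where
  "PiGroup G D tf = \<lparr>carrier = PiG (carrier G) D tf, mult = odot G tf,
                      one = delta (carrier G) D \<one>\<^bsub>G\<^esub>\<rparr>"

end

theory Submission
  imports Defs "HOL-Probability.Helly_Selection"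
begin

(*
  A point of the completion is the function f_a x = lim D (a n) x of a Cauchy sequence a.
  All limits are weak limits in Delta_plus: by Helly's selection theorem, a sequence G
  satisfying tf (E n p) (G p) \<le> G n with E n p \<rightarrow> H0 has subsequential limits that
  dominate each other, so it converges. The distance DD f_a f_b is the weak limit of
  D (a n) (b n); through the continuity of the triangle function every property of D passes
  to DD, and f_a is the limit of the points delta (a n). A complete space X containing a
  dense isometric image \<phi> of G receives the isometry sending f_a to the limit of \<phi> (a n).
  For groups, f_a \<odot> f_b = f_c with c n = a n \<otimes> b n, which makes that isometry
  multiplicative.
*)

section \<open>Distribution functions and weak convergence\<close>

lemma Delta_plusD:
  assumes "F \<in> Delta_plus"
  shows "mono F" "0 \<le> F t" "F t \<le> 1" "continuous (at_left (ereal x)) F"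
    "F (-\<infinity>) = 0" "F \<infinity> = 1" "F 0 = 0"
  using assms by (auto simp: Delta_plus_def distfun_def)

lemma Delta_plus_nonpos:
  assumes "F \<in> Delta_plus" "t \<le> 0"
  shows "F t = 0"
  using Delta_plusD[OF assms(1)] assms(2) by (metis monoD order_antisym)

lemma H0_pos: "0 < t \<Longrightarrow> H0 (ereal t) = 1"
  by (simp add: H0_def)

lemma H0_nonpos: "t \<le> 0 \<Longrightarrow> H0 (ereal t) = 0"
  by (simp add: H0_def)

lemma H0_in_Delta_plus: "H0 \<in> Delta_plus"
proof -
  have "continuous (at_left (ereal x)) H0" for x
  proof -
    have "eventually (\<lambda>y. H0 y = H0 (ereal x)) (at_left (ereal x))"
    proof (cases "x \<le> 0")
      case True
      then have "y \<le> 0" if "y < ereal x" for y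
        using that by (metis ereal_less_eq(3) less_imp_le order_trans zero_ereal_def)
      then show ?thesis
        using True by (auto simp: eventually_at_filter H0_def)
    next
      case False
      then show ?thesis
        by (intro eventually_at_leftI[of "ereal 0"]) (auto simp: H0_def zero_ereal_def)
    qed
    then show ?thesis
      unfolding continuous_within by (simp add: tendsto_eventually)
  qed
  then show ?thesis
    unfolding Delta_plus_def distfun_def by (auto simp: H0_def mono_def)
qed

abbreviation on_reals :: "dfun \<Rightarrow> real \<Rightarrow> real" where
  "on_reals F \<equiv> \<lambda>x. F (ereal x)"

lemma continuous_at_left_ereal_iff:
  "continuous (at_left (ereal x)) F \<longleftrightarrow> continuous (at_left x) (on_reals F)"
  unfolding continuous_within by (simp add: at_left_ereal filterlim_filtermap)

lemma countable_discont_Delta_plus: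
  "F \<in> Delta_plus \<Longrightarrow> countable {x. \<not> isCont (on_reals F) x}"
  using Delta_plusD(1) by (intro mono_ctble_discont) (auto simp: mono_def)

lemma exists_common_continuity_point:
  assumes "F \<in> Delta_plus" "G \<in> Delta_plus" "s < t"
  shows "\<exists>u. s < u \<and> u < t \<and> isCont (on_reals F) u \<and> isCont (on_reals G) u"
proof -
  have "countable ({x. \<not> isCont (on_reals F) x} \<union> {x. \<not> isCont (on_reals G) x})"
    using countable_discont_Delta_plus assms by auto
  from open_minus_countable[OF this, of "{s<..<t}"] assms(3) show ?thesis
    by auto
qed

lemma le_of_left_continuous:
  fixes g :: "real \<Rightarrow> real"
  assumes "continuous (at_left t) g" "\<And>s. s < t \<Longrightarrow> g s \<le> c"
  shows "g t \<le> c"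
proof (rule tendsto_upperbound)
  show "(g \<longlongrightarrow> g t) (at_left t)"
    using assms(1) by (simp add: continuous_within)
  show "eventually (\<lambda>s. g s \<le> c) (at_left t)"
    unfolding eventually_at_filter by (rule always_eventually) (auto intro: assms(2))
qed (simp add: trivial_limit_at_left_real)

lemma Delta_plus_le_of_left:
  assumes "F \<in> Delta_plus" "\<And>s. s < t \<Longrightarrow> F (ereal s) \<le> c"
  shows "F (ereal t) \<le> c"
  using le_of_left_continuous[of t "on_reals F" c] Delta_plusD(4)[OF assms(1)] assms(2)
  by (simp add: continuous_at_left_ereal_iff)

lemma wconv_le:
  assumes F: "F \<in> Delta_plus" and G: "G \<in> Delta_plus"
    and "wconv Fs F" "wconv Gs G" and le: "\<And>n. Fs n \<le> Gs n"
  shows "F \<le> G"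
proof (rule le_funI)
  fix t :: ereal
  show "F t \<le> G t"
  proof (cases t)
    case (real r)
    have "F (ereal r) \<le> G (ereal r)"
    proof (rule Delta_plus_le_of_left[OF F])
      fix s assume "s < r"
      then obtain u where u: "s < u" "u < r" "isCont (on_reals F) u" "isCont (on_reals G) u"
        using exists_common_continuity_point[OF F G] by blast
      have "F (ereal s) \<le> F (ereal u)"
        using Delta_plusD(1)[OF F] u(1) by (simp add: mono_def)
      also have "F (ereal u) \<le> G (ereal u)"
        using assms u le unfolding wconv_def le_fun_def
        by (intro LIMSEQ_le[of "\<lambda>n. Fs n (ereal u)" _ "\<lambda>n. Gs n (ereal u)"]) auto
      also have "G (ereal u) \<le> G (ereal r)"
        using Delta_plusD(1)[OF G] u(2) by (simp add: mono_def)
      finally show "F (ereal s) \<le> G (ereal r)" .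
    qed
    then show ?thesis
      using real by simp
  qed (use Delta_plusD[OF F] Delta_plusD[OF G] in auto)
qed

lemma wconv_const: "wconv (\<lambda>n. F) F"
  unfolding wconv_def by simp

lemma wconv_unique:
  assumes "F \<in> Delta_plus" "G \<in> Delta_plus" "wconv Fs F" "wconv Fs G"
  shows "F = G"
  using wconv_le[OF assms(1-4)] wconv_le[OF assms(2,1,4,3)] by (auto intro: order.antisym)

text \<open>C need not be left-continuous, so that it can be a supremum formed with dsup.\<close>
lemma wconv_le_bound:
  assumes F: "F \<in> Delta_plus" and "wconv Fs F" and le: "\<And>n. Fs n \<le> C"
    and C: "mono C" "\<And>t. 0 \<le> C t" "1 \<le> C \<infinity>"
  shows "F \<le> C"
proof (rule le_funI)
  fix t :: ereal
  show "F t \<le> C t"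
  proof (cases t)
    case (real r)
    have "F (ereal r) \<le> C (ereal r)"
    proof (rule Delta_plus_le_of_left[OF F])
      fix s assume "s < r"
      then obtain u where u: "s < u" "u < r" "isCont (on_reals F) u"
        using exists_common_continuity_point[OF F F] by blast
      have "F (ereal s) \<le> F (ereal u)"
        using Delta_plusD(1)[OF F] u(1) by (simp add: mono_def)
      also have "F (ereal u) \<le> C (ereal u)"
        using assms u unfolding wconv_def le_fun_def
        by (intro LIMSEQ_le_const2[of "\<lambda>n. Fs n (ereal u)"]) auto
      also have "C (ereal u) \<le> C (ereal r)"
        using C(1) u(2) by (simp add: mono_def)
      finally show "F (ereal s) \<le> C (ereal r)" .
    qed
    then show ?thesis
      using real by simp
  qed (use Delta_plusD[OF F] C in auto)
qed

lemma isCont_H0: "0 < t \<Longrightarrow> isCont (on_reals H0) t"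
proof -
  assume "0 < t"
  then have "eventually (\<lambda>x. x \<in> {0<..}) (nhds t)"
    by (intro eventually_nhds_in_open) auto
  then have "eventually (\<lambda>x. on_reals H0 x = 1) (nhds t)"
    by eventually_elim (simp add: H0_def)
  then show ?thesis
    using isCont_cong[of "on_reals H0" "\<lambda>_. 1" t] by simp
qed

lemma wconv_H0_iff:
  assumes "\<And>n. Fs n \<in> Delta_plus"
  shows "wconv Fs H0 \<longleftrightarrow> (\<forall>t>0. (\<lambda>n. Fs n (ereal t)) \<longlonglongrightarrow> 1)"
proof
  assume "wconv Fs H0"
  then show "\<forall>t>0. (\<lambda>n. Fs n (ereal t)) \<longlonglongrightarrow> 1"
    unfolding wconv_def using isCont_H0 H0_pos by metis
next
  assume h: "\<forall>t>0. (\<lambda>n. Fs n (ereal t)) \<longlonglongrightarrow> 1"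
  have "(\<lambda>n. Fs n (ereal t)) \<longlonglongrightarrow> H0 (ereal t)" for t
    using h Delta_plus_nonpos[OF assms] by (cases "0 < t") (simp_all add: H0_def)
  then show "wconv Fs H0"
    unfolding wconv_def by blast
qed

lemma wconv_H0_iff_eventually:
  assumes "\<And>n. Fs n \<in> Delta_plus"
  shows "wconv Fs H0 \<longleftrightarrow> (\<forall>t>0. \<forall>e>0. \<exists>N. \<forall>n\<ge>N. 1 - e < Fs n (ereal t))"
proof -
  have "dist (Fs n (ereal t)) 1 < e \<longleftrightarrow> 1 - e < Fs n (ereal t)" for n t e
    using Delta_plusD(3)[OF assms, of n "ereal t"] by (auto simp: dist_real_def)
  then show ?thesis
    unfolding wconv_H0_iff[OF assms] LIMSEQ_def by simp
qed

lemma wconv_H0_le: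
  assumes "\<And>n. Fs n \<in> Delta_plus" "\<And>n. Gs n \<in> Delta_plus" "wconv Gs H0" "\<And>n. Gs n \<le> Fs n"
  shows "wconv Fs H0"
  unfolding wconv_H0_iff[OF assms(1)]
proof (intro allI impI)
  fix t :: real assume "0 < t"
  then have "(\<lambda>n. Gs n (ereal t)) \<longlonglongrightarrow> 1"
    using assms(2,3) wconv_H0_iff by blast
  then show "(\<lambda>n. Fs n (ereal t)) \<longlonglongrightarrow> 1"
    by (rule tendsto_sandwich[rotated 2])
      (use assms(4) Delta_plusD(3)[OF assms(1)] in \<open>auto simp: le_fun_def\<close>)
qed

lemma wconv_reindex:
  assumes "wconv Fs F" "\<And>i. i \<le> r i"
  shows "wconv (\<lambda>i. Fs (r i)) F"
proof -
  have "filterlim r at_top sequentially"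
    using assms(2) by (intro filterlim_at_top_mono[OF filterlim_ident]) auto
  with assms(1) show ?thesis
    unfolding wconv_def by (auto intro: filterlim_compose[of "\<lambda>n. Fs n _"])
qed

lemma wconv_lower_bound:
  assumes F: "F \<in> Delta_plus" and G: "\<And>n. Gs n \<in> Delta_plus" and "wconv Gs F" and "s < t"
    and lb: "\<And>n. N \<le> n \<Longrightarrow> c \<le> Gs n (ereal s)"
  shows "c \<le> F (ereal t)"
proof -
  obtain u where u: "s < u" "u < t" "isCont (on_reals F) u"
    using exists_common_continuity_point[OF F F \<open>s < t\<close>] by blast
  have "c \<le> Gs n (ereal u)" if "N \<le> n" for n
    using lb[OF that] Delta_plusD(1)[OF G] u(1) by (metis ereal_less_eq(3) less_imp_le monoD order_trans)
  then have "c \<le> F (ereal u)"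
    using assms(3) u(3) unfolding wconv_def by (blast intro: LIMSEQ_le_const)
  also have "F (ereal u) \<le> F (ereal t)"
    using Delta_plusD(1)[OF F] u(2) by (simp add: mono_def)
  finally show ?thesis .
qed

lemma wconv_H0_if_bound:
  assumes H: "\<And>k. H k \<in> Delta_plus"
    and bound: "\<And>k. 1 - 1 / (real k + 1) < H k (ereal (1 / (real k + 1)))"
  shows "wconv H H0"
  unfolding wconv_H0_iff_eventually[OF H]
proof (intro allI impI)
  fix t e :: real assume "0 < t" "0 < e"
  then obtain N where N: "inverse (real (Suc N)) < min t e"
    using reals_Archimedean[of "min t e"] by auto
  have "1 - e < H k (ereal t)" if "N \<le> k" for k
  proof -
    have "1 / (real k + 1) \<le> inverse (real (Suc N))"
      using that by (simp add: divide_simps)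
    then have "1 / (real k + 1) < t" "1 / (real k + 1) < e"
      using N by auto
    then show ?thesis
      using bound[of k] Delta_plusD(1)[OF H, of k] by (smt (verit) ereal_less_eq(3) monoD)
  qed
  then show "\<exists>N. \<forall>k\<ge>N. 1 - e < H k (ereal t)"
    by blast
qed

definition double_wconv_H0 :: "(nat \<Rightarrow> nat \<Rightarrow> dfun) \<Rightarrow> bool" where
  "double_wconv_H0 E \<longleftrightarrow> (\<forall>t>0. \<forall>e>0. \<exists>N. \<forall>n\<ge>N. \<forall>p\<ge>N. 1 - e < E n p (ereal t))"

text \<open>A double limit is tested along all pairs of index sequences tending to infinity; this
  turns it into ordinary weak convergence, to which the continuity of a triangle function
  applies.\<close>
lemma double_wconv_H0_iff_pairs:
  assumes E: "\<And>n p. E n p \<in> Delta_plus"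
  shows "double_wconv_H0 E \<longleftrightarrow>
    (\<forall>r s. (\<forall>i. i \<le> r i \<and> i \<le> s i) \<longrightarrow> wconv (\<lambda>i. E (r i) (s i)) H0)"
proof
  assume d: "double_wconv_H0 E"
  show "\<forall>r s. (\<forall>i. i \<le> r i \<and> i \<le> s i) \<longrightarrow> wconv (\<lambda>i. E (r i) (s i)) H0"
  proof (intro allI impI)
    fix r s :: "nat \<Rightarrow> nat" assume rs: "\<forall>i. i \<le> r i \<and> i \<le> s i"
    show "wconv (\<lambda>i. E (r i) (s i)) H0"
      unfolding wconv_H0_iff_eventually[of "\<lambda>i. E (r i) (s i)", OF E]
    proof (intro allI impI)
      fix t e :: real assume "0 < t" "0 < e"
      then obtain N where "\<forall>n\<ge>N. \<forall>p\<ge>N. 1 - e < E n p (ereal t)"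
        using d unfolding double_wconv_H0_def by blast
      then show "\<exists>N. \<forall>n\<ge>N. 1 - e < E (r n) (s n) (ereal t)"
        using rs order_trans by blast
    qed
  qed
next
  assume pairs: "\<forall>r s. (\<forall>i. i \<le> r i \<and> i \<le> s i) \<longrightarrow> wconv (\<lambda>i. E (r i) (s i)) H0"
  show "double_wconv_H0 E"
  proof (rule ccontr)
    assume "\<not> double_wconv_H0 E"
    then obtain t e :: real where "0 < t" "0 < e"
      and "\<forall>N. \<exists>n\<ge>N. \<exists>p\<ge>N. E n p (ereal t) \<le> 1 - e"
      unfolding double_wconv_H0_def by (auto simp: not_less)
    then have "\<forall>N. \<exists>n. \<exists>p. N \<le> n \<and> N \<le> p \<and> E n p (ereal t) \<le> 1 - e"
      by blast
    from choice[OF this] obtain r where "\<forall>N. \<exists>p. N \<le> r N \<and> N \<le> p \<and> E (r N) p (ereal t) \<le> 1 - e" ..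
    from choice[OF this] obtain s where rs: "\<forall>N. N \<le> r N \<and> N \<le> s N \<and> E (r N) (s N) (ereal t) \<le> 1 - e" ..
    then have "wconv (\<lambda>i. E (r i) (s i)) H0"
      using pairs by blast
    then obtain N where "\<forall>n\<ge>N. 1 - e < E (r n) (s n) (ereal t)"
      using \<open>0 < t\<close> \<open>0 < e\<close> wconv_H0_iff_eventually[of "\<lambda>i. E (r i) (s i)", OF E] by blast
    then show False
      using rs by (meson order_refl not_le)
  qed
qed

lemma pm_cauchy_iff_double_wconv_H0:
  assumes D: "\<And>n p. D (z n) (z p) \<in> Delta_plus"
  shows "pm_cauchy D z \<longleftrightarrow> double_wconv_H0 (\<lambda>n p. D (z n) (z p))"
proof -
  have pos: "\<bar>D (z n) (z p) (ereal t) - H0 (ereal t)\<bar> < e \<longleftrightarrow> 1 - e < D (z n) (z p) (ereal t)"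
    if "0 < t" for n p t e
    using Delta_plusD(3)[OF D, of n p "ereal t"] that by (auto simp: H0_pos)
  have nonpos: "\<bar>D (z n) (z p) (ereal t) - H0 (ereal t)\<bar> < e" if "t \<le> 0" "0 < e" for n p t e
    using that Delta_plus_nonpos[OF D] by (simp add: H0_nonpos)
  show ?thesis
    unfolding pm_cauchy_def double_wconv_H0_def
  proof (intro iffI allI impI)
    fix t e :: real assume "\<forall>t. isCont (on_reals H0) t \<longrightarrow>
      (\<forall>e>0. \<exists>N. \<forall>n\<ge>N. \<forall>p\<ge>N. \<bar>D (z n) (z p) (ereal t) - H0 (ereal t)\<bar> < e)"
      and "0 < t" "0 < e"
    then have "\<exists>N. \<forall>n\<ge>N. \<forall>p\<ge>N. \<bar>D (z n) (z p) (ereal t) - H0 (ereal t)\<bar> < e"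
      using isCont_H0 by blast
    then show "\<exists>N. \<forall>n\<ge>N. \<forall>p\<ge>N. 1 - e < D (z n) (z p) (ereal t)"
      using pos[OF \<open>0 < t\<close>] by simp
  next
    fix t e :: real assume "\<forall>t>0. \<forall>e>0. \<exists>N. \<forall>n\<ge>N. \<forall>p\<ge>N. 1 - e < D (z n) (z p) (ereal t)"
      and "0 < e"
    then show "\<exists>N. \<forall>n\<ge>N. \<forall>p\<ge>N. \<bar>D (z n) (z p) (ereal t) - H0 (ereal t)\<bar> < e"
      using pos nonpos by (cases "0 < t") auto
  qed
qed

lemma dsup_upper:
  assumes "A \<subseteq> Delta_plus" "F \<in> A"
  shows "F \<le> dsup A"
proof (rule le_funI)
  fix t
  have "bdd_above (insert 0 ((\<lambda>F. F t) ` A))"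
    using assms(1) Delta_plusD(3) by (intro bdd_aboveI[of _ 1]) auto
  then show "F t \<le> dsup A t"
    using assms Delta_plusD(3) by (auto simp: dsup_def intro: cSup_upper)
qed

lemma dsup_least:
  assumes "L \<in> Delta_plus" "\<And>F. F \<in> A \<Longrightarrow> F \<le> L"
  shows "dsup A \<le> L"
  using assms Delta_plusD(2,6)[OF assms(1)]
  by (auto simp: le_fun_def dsup_def intro!: cSup_least)

lemma dsup_bounds:
  assumes "A \<subseteq> Delta_plus"
  shows "mono (dsup A)" "0 \<le> dsup A t" "1 \<le> dsup A \<infinity>"
proof -
  have bdd: "bdd_above (insert 0 ((\<lambda>F. F t) ` A))" for t
    using assms Delta_plusD(3) by (intro bdd_aboveI[of _ 1]) auto
  show "0 \<le> dsup A t"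
    using bdd[of t] by (simp add: dsup_def cSup_upper)
  show "1 \<le> dsup A \<infinity>"
    by (simp add: dsup_def)
  have le1: "Sup (insert 0 ((\<lambda>F. F t) ` A)) \<le> 1" for t
    using assms Delta_plusD(3) by (intro cSup_least) auto
  have "Sup (insert 0 ((\<lambda>F. F s) ` A)) \<le> Sup (insert 0 ((\<lambda>F. F t) ` A))" if "s \<le> t" for s t
  proof (rule cSup_least)
    fix y assume "y \<in> insert 0 ((\<lambda>F. F s) ` A)"
    then show "y \<le> Sup (insert 0 ((\<lambda>F. F t) ` A))"
      using assms that bdd[of t] Delta_plusD(1)
      by (auto intro: cSup_upper2 simp: mono_def subset_iff)
  qed simp
  then show "mono (dsup A)"
    using le1 by (auto simp: mono_def dsup_def)
qed

definition wlim :: "(nat \<Rightarrow> dfun) \<Rightarrow> dfun" where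
  "wlim Gs = (SOME F. F \<in> Delta_plus \<and> wconv Gs F)"

lemma wlim_eq:
  assumes "F \<in> Delta_plus" "wconv Gs F"
  shows "wlim Gs = F"
proof -
  have "wlim Gs \<in> Delta_plus \<and> wconv Gs (wlim Gs)"
    unfolding wlim_def using assms by (rule someI[of _ F, OF conjI])
  then show ?thesis
    using wconv_unique assms by blast
qed

section \<open>Helly's selection theorem in Delta_plus\<close>

definition reflect :: "(real \<Rightarrow> real) \<Rightarrow> real \<Rightarrow> real" where
  "reflect g = (\<lambda>x. - g (- x))"

lemma mono_reflect: "mono g \<Longrightarrow> mono (reflect g)"
  by (simp add: reflect_def mono_def)

lemma continuous_at_right_reflect:
  "continuous (at_right (- x)) (reflect g) \<longleftrightarrow> continuous (at_left x) g"
proof -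
  have "continuous (at_left x) g \<longleftrightarrow> (g \<longlongrightarrow> g x) (at_left x)"
    by (simp add: continuous_within)
  also have "\<dots> \<longleftrightarrow> ((\<lambda>y. g (- y)) \<longlongrightarrow> g x) (at_right (- x))"
    by (simp add: at_left_minus[of x] filterlim_filtermap)
  also have "\<dots> \<longleftrightarrow> continuous (at_right (- x)) (reflect g)"
    by (simp add: continuous_within reflect_def tendsto_minus_cancel_left[symmetric])
  finally show ?thesis ..
qed

lemma continuous_at_left_reflect:
  "continuous (at_left (- x)) (reflect g) \<longleftrightarrow> continuous (at_right x) g"
proof -
  have "continuous (at_right x) g \<longleftrightarrow> (g \<longlongrightarrow> g x) (at_right x)"
    by (simp add: continuous_within)
  also have "\<dots> \<longleftrightarrow> ((\<lambda>y. g (- y)) \<longlongrightarrow> g x) (at_left (- x))"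
    by (simp add: at_right_minus[of x] filterlim_filtermap)
  also have "\<dots> \<longleftrightarrow> continuous (at_left (- x)) (reflect g)"
    by (simp add: continuous_within reflect_def tendsto_minus_cancel_left[symmetric])
  finally show ?thesis ..
qed

lemma isCont_reflect: "isCont (reflect g) (- x) \<longleftrightarrow> isCont g x"
  by (auto simp: continuous_at_split continuous_at_right_reflect continuous_at_left_reflect)

lemma Helly_selection_left_continuous:
  fixes f :: "nat \<Rightarrow> real \<Rightarrow> real"
  assumes "\<And>n x. continuous (at_left x) (f n)" "\<And>n. mono (f n)" "\<And>n x. \<bar>f n x\<bar> \<le> M"
  obtains s g where "strict_mono s" "\<And>x. continuous (at_left x) g" "mono g"
    "\<And>x. isCont g x \<Longrightarrow> (\<lambda>n. f (s n) x) \<longlonglongrightarrow> g x"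
proof -
  have "continuous (at_right x) (reflect (f n))" for n x
    using assms(1) continuous_at_right_reflect[of "- x" "f n"] by simp
  moreover have "\<bar>reflect (f n) x\<bar> \<le> M" for n x
    using assms(3) by (simp add: reflect_def)
  ultimately obtain s h where s: "strict_mono s" and h: "\<And>x. continuous (at_right x) h" "mono h"
    "\<And>x. isCont h x \<Longrightarrow> (\<lambda>n. reflect (f (s n)) x) \<longlonglongrightarrow> h x"
    using Helly_selection[of "\<lambda>n. reflect (f n)" M] mono_reflect[OF assms(2)] by blast
  show ?thesis
  proof (rule that[OF s, of "reflect h"])
    show "continuous (at_left x) (reflect h)" for x
      using h(1)[of "- x"] continuous_at_left_reflect[of "- x" h] by simp
    show "mono (reflect h)"
      by (rule mono_reflect[OF h(2)])
    show "(\<lambda>n. f (s n) x) \<longlonglongrightarrow> reflect h x" if "isCont (reflect h) x" for x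
      using h(3)[of "- x"] that isCont_reflect[where g = h and x = "- x"]
      by (simp add: reflect_def tendsto_minus_cancel_left[symmetric])
  qed
qed

lemma Delta_plus_of_real_restriction:
  fixes g :: "real \<Rightarrow> real"
  assumes "mono g" "\<And>x. continuous (at_left x) g" "\<And>x. 0 \<le> g x" "\<And>x. g x \<le> 1" "g 0 = 0"
  defines "F \<equiv> \<lambda>t. if t = \<infinity> then 1 else if t = - \<infinity> then 0 else g (real_of_ereal t)"
  shows "F \<in> Delta_plus" "on_reals F = g"
proof -
  show real: "on_reals F = g"
    by (simp add: F_def)
  have "mono F"
  proof (rule monoI)
    fix a b :: ereal assume "a \<le> b"
    then show "F a \<le> F b"
      using assms(1,3,4) by (cases a; cases b) (auto simp: F_def mono_def)
  qed
  then show "F \<in> Delta_plus"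
    unfolding Delta_plus_def distfun_def continuous_at_left_ereal_iff real
    using assms(2-5) by (auto simp: F_def zero_ereal_def)
qed

lemma Delta_plus_limit_bounds:
  fixes Gs :: "nat \<Rightarrow> dfun" and g :: "real \<Rightarrow> real"
  assumes G: "\<And>n. Gs n \<in> Delta_plus" and g: "mono g" "\<And>x. continuous (at_left x) g"
    and lim: "\<And>x. isCont g x \<Longrightarrow> (\<lambda>n. Gs n (ereal x)) \<longlonglongrightarrow> g x"
  shows "0 \<le> g x" "g x \<le> 1" "g 0 = 0"
proof -
  have cont_point: "\<exists>u. a < u \<and> u < b \<and> isCont g u" if "a < b" for a b
    using open_minus_countable[OF mono_ctble_discont[OF g(1)], of "{a<..<b}"] that by auto
  have nonneg: "0 \<le> g x" for x
  proof -
    obtain u where u: "x - 1 < u" "u < x" "isCont g u"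
      using cont_point[of "x - 1" x] by auto
    have "0 \<le> g u"
      using lim[OF u(3)] Delta_plusD(2)[OF G] by (intro LIMSEQ_le_const) auto
    also have "g u \<le> g x"
      using monoD[OF g(1)] u(2) by simp
    finally show ?thesis .
  qed
  then show "0 \<le> g x" .
  show "g x \<le> 1"
  proof -
    obtain u where u: "x < u" "u < x + 1" "isCont g u"
      using cont_point[of x "x + 1"] by auto
    have "g x \<le> g u"
      using monoD[OF g(1)] u(1) by simp
    also have "g u \<le> 1"
      using lim[OF u(3)] Delta_plusD(3)[OF G] by (intro LIMSEQ_le_const2) auto
    finally show ?thesis .
  qed
  have "g 0 \<le> 0"
  proof (rule le_of_left_continuous[OF g(2)])
    fix a :: real assume "a < 0"
    then obtain u where u: "a < u" "u < 0" "isCont g u"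
      using cont_point by blast
    have "g a \<le> g u"
      using monoD[OF g(1)] u(1) by simp
    also have "g u \<le> 0"
      using lim[OF u(3)] Delta_plus_nonpos[OF G, where t = "ereal u"] u(2)
      by (intro LIMSEQ_le_const2) (auto simp: zero_ereal_def)
    finally show "g a \<le> 0" .
  qed
  then show "g 0 = 0"
    using nonneg[of 0] by simp
qed

lemma Delta_plus_Helly:
  fixes Gs :: "nat \<Rightarrow> dfun"
  assumes G: "\<And>n. Gs n \<in> Delta_plus"
  obtains s F where "strict_mono s" "F \<in> Delta_plus" "wconv (\<lambda>k. Gs (s k)) F"
proof -
  obtain s g where s: "strict_mono s" and g: "\<And>x. continuous (at_left x) g" "mono g"
    and lim: "\<And>x. isCont g x \<Longrightarrow> (\<lambda>n. Gs (s n) (ereal x)) \<longlonglongrightarrow> g x"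
  proof (rule Helly_selection_left_continuous[where f = "\<lambda>n. on_reals (Gs n)" and M = 1])
    show "continuous (at_left x) (on_reals (Gs n))" for n x
      using Delta_plusD(4)[OF G] continuous_at_left_ereal_iff by blast
    show "mono (on_reals (Gs n))" for n
      using Delta_plusD(1)[OF G] by (simp add: mono_def)
    show "\<bar>on_reals (Gs n) x\<bar> \<le> 1" for n x
      using Delta_plusD(2,3)[OF G] by (simp add: abs_le_iff order_trans[of _ 0 1])
  qed blast
  note bounds = Delta_plus_limit_bounds[of "\<lambda>n. Gs (s n)", OF G g(2,1) lim]
  obtain F where "F \<in> Delta_plus" "on_reals F = g"
    using Delta_plus_of_real_restriction[OF g(2,1) bounds] by blast
  moreover have "wconv (\<lambda>k. Gs (s k)) F"
    unfolding wconv_def using lim fun_cong[OF \<open>on_reals F = g\<close>] by simp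
  ultimately show ?thesis
    using that s by blast
qed

lemma wconv_if_subseq_limits_eq:
  assumes G: "\<And>n. Gs n \<in> Delta_plus" and "C \<in> Delta_plus"
    and subseq: "\<And>r F. strict_mono r \<Longrightarrow> F \<in> Delta_plus \<Longrightarrow> wconv (\<lambda>k. Gs (r k)) F \<Longrightarrow> F = C"
  shows "wconv Gs C"
  unfolding wconv_def
proof (intro allI impI)
  fix t assume ct: "isCont (on_reals C) t"
  show "(\<lambda>n. Gs n (ereal t)) \<longlonglongrightarrow> C (ereal t)"
  proof (rule ccontr)
    assume "\<not> ?thesis"
    then obtain e :: real where "0 < e" and "\<forall>N. \<exists>n\<ge>N. e \<le> \<bar>Gs n (ereal t) - C (ereal t)\<bar>"
      unfolding LIMSEQ_def dist_real_def by (auto simp: not_less)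
    then have "infinite {n. e \<le> \<bar>Gs n (ereal t) - C (ereal t)\<bar>}"
      unfolding infinite_nat_iff_unbounded_le by simp
    then obtain r :: "nat \<Rightarrow> nat" where r: "strict_mono r"
      and far: "\<And>n. e \<le> \<bar>Gs (r n) (ereal t) - C (ereal t)\<bar>"
      using infinite_enumerate by blast
    obtain r' F where r': "strict_mono r'" "F \<in> Delta_plus" "wconv (\<lambda>k. Gs (r (r' k))) F"
      using Delta_plus_Helly[of "\<lambda>k. Gs (r k)"] G by blast
    then have "F = C"
      using subseq[of "r \<circ> r'" F] strict_mono_o[OF r r'(1)] by (simp add: o_def)
    then have "(\<lambda>k. Gs (r (r' k)) (ereal t)) \<longlonglongrightarrow> C (ereal t)"
      using r'(3) ct unfolding wconv_def by simp
    then obtain N where "\<bar>Gs (r (r' N)) (ereal t) - C (ereal t)\<bar> < e"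
      using \<open>0 < e\<close> unfolding LIMSEQ_def dist_real_def by blast
    then show False
      using far[of "r' N"] by simp
  qed
qed

lemma wconv_exists_if_subseq_limits_le:
  assumes G: "\<And>n. Gs n \<in> Delta_plus"
    and le: "\<And>r s F1 F2. strict_mono r \<Longrightarrow> strict_mono s \<Longrightarrow> F1 \<in> Delta_plus \<Longrightarrow> F2 \<in> Delta_plus
       \<Longrightarrow> wconv (\<lambda>k. Gs (r k)) F1 \<Longrightarrow> wconv (\<lambda>k. Gs (s k)) F2 \<Longrightarrow> F2 \<le> F1"
  obtains F where "F \<in> Delta_plus" "wconv Gs F"
proof -
  obtain r0 F0 where r0: "strict_mono r0" "F0 \<in> Delta_plus" "wconv (\<lambda>k. Gs (r0 k)) F0"
    by (rule Delta_plus_Helly[OF G])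
  have "wconv Gs F0"
  proof (rule wconv_if_subseq_limits_eq[OF G r0(2)])
    fix r F assume "strict_mono r" "F \<in> Delta_plus" "wconv (\<lambda>k. Gs (r k)) F"
    then show "F = F0"
      using le[OF r0(1) _ r0(2) _ r0(3)] le[OF _ r0(1) _ r0(2) _ r0(3)] by (blast intro: order.antisym)
  qed
  then show ?thesis
    using that r0(2) by blast
qed

section \<open>Continuous triangle functions\<close>

locale continuous_triangle =
  fixes tf :: "dfun \<Rightarrow> dfun \<Rightarrow> dfun"
  assumes triangle: "triangle_function tf" and continuous: "continuous_tf tf"
begin

lemma tf_closed: "F \<in> Delta_plus \<Longrightarrow> L \<in> Delta_plus \<Longrightarrow> tf F L \<in> Delta_plus"
  using triangle unfolding triangle_function_def by (elim conjE) meson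

lemma tf_commute: "F \<in> Delta_plus \<Longrightarrow> L \<in> Delta_plus \<Longrightarrow> tf F L = tf L F"
  using triangle unfolding triangle_function_def by (elim conjE) meson

lemma tf_assoc:
  "F \<in> Delta_plus \<Longrightarrow> L \<in> Delta_plus \<Longrightarrow> M \<in> Delta_plus \<Longrightarrow> tf (tf F L) M = tf F (tf L M)"
  using triangle unfolding triangle_function_def by (elim conjE) meson

lemma tf_mono_left:
  "F \<in> Delta_plus \<Longrightarrow> F' \<in> Delta_plus \<Longrightarrow> L \<in> Delta_plus \<Longrightarrow> F \<le> F' \<Longrightarrow> tf F L \<le> tf F' L"
  using triangle unfolding triangle_function_def by (elim conjE) meson

lemma tf_mono_right:
  "F \<in> Delta_plus \<Longrightarrow> L \<in> Delta_plus \<Longrightarrow> L' \<in> Delta_plus \<Longrightarrow> L \<le> L' \<Longrightarrow> tf F L \<le> tf F L'"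
  using triangle unfolding triangle_function_def by (elim conjE) meson

lemma tf_H0_right [simp]: "F \<in> Delta_plus \<Longrightarrow> tf F H0 = F"
  using triangle unfolding triangle_function_def by (elim conjE) meson

lemma tf_H0_left [simp]: "F \<in> Delta_plus \<Longrightarrow> tf H0 F = F"
  using tf_commute[OF H0_in_Delta_plus] by simp

lemma tf_right_commute:
  assumes "F \<in> Delta_plus" "L \<in> Delta_plus" "M \<in> Delta_plus"
  shows "tf (tf F L) M = tf (tf F M) L"
  using assms by (simp add: tf_assoc tf_commute[of L M])

lemma tf_wconv:
  assumes "\<And>n. Fs n \<in> Delta_plus" "\<And>n. Ls n \<in> Delta_plus" "F \<in> Delta_plus" "L \<in> Delta_plus"
    and "wconv Fs F" "wconv Ls L"
  shows "wconv (\<lambda>n. tf (Fs n) (Ls n)) (tf F L)"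
  using continuous assms unfolding continuous_tf_def by blast

lemma tf_wconv_H0:
  assumes "\<And>n. Fs n \<in> Delta_plus" "\<And>n. Ls n \<in> Delta_plus" "wconv Fs H0" "wconv Ls H0"
  shows "wconv (\<lambda>n. tf (Fs n) (Ls n)) H0"
  using tf_wconv[OF assms(1,2) H0_in_Delta_plus H0_in_Delta_plus assms(3,4)] H0_in_Delta_plus by simp

lemma wconv_H0_if_tf_le:
  assumes "\<And>n. Fs n \<in> Delta_plus" "\<And>n. Ls n \<in> Delta_plus" "\<And>n. Ms n \<in> Delta_plus"
    and "wconv Fs H0" "wconv Ls H0" "\<And>n. tf (Fs n) (Ls n) \<le> Ms n"
  shows "wconv Ms H0"
  by (rule wconv_H0_le[OF assms(3) tf_closed[OF assms(1,2)] tf_wconv_H0[OF assms(1,2,4,5)]])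
    (use assms(6) in simp)

lemma tf_le_of_wconv:
  assumes "\<And>n. Fs n \<in> Delta_plus" "\<And>n. Ls n \<in> Delta_plus" "\<And>n. Ms n \<in> Delta_plus"
    and "F \<in> Delta_plus" "L \<in> Delta_plus" "M \<in> Delta_plus"
    and "wconv Fs F" "wconv Ls L" "wconv Ms M" "\<And>n. tf (Fs n) (Ls n) \<le> Ms n"
  shows "tf F L \<le> M"
  by (rule wconv_le[OF tf_closed[OF assms(4,5)] assms(6) tf_wconv[OF assms(1,2,4,5,7,8)] assms(9)])
    (use assms(10) in simp)

text \<open>Any two subsequential limits dominate each other, so they coincide.\<close>
lemma wconv_exists_if_lipschitz:
  assumes G: "\<And>n. Gs n \<in> Delta_plus" and E: "\<And>n p. E n p \<in> Delta_plus"
    and E_H0: "\<And>r s. \<forall>i. i \<le> r i \<and> i \<le> s i \<Longrightarrow> wconv (\<lambda>i. E (r i) (s i)) H0"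
    and lipschitz: "\<And>n p. tf (E n p) (Gs p) \<le> Gs n"
  obtains F where "F \<in> Delta_plus" "wconv Gs F"
proof (rule wconv_exists_if_subseq_limits_le[OF G])
  fix r s :: "nat \<Rightarrow> nat" and F1 F2
  assume "strict_mono r" "strict_mono s" and F: "F1 \<in> Delta_plus" "F2 \<in> Delta_plus"
    and lim: "wconv (\<lambda>k. Gs (r k)) F1" "wconv (\<lambda>k. Gs (s k)) F2"
  have "wconv (\<lambda>i. E (r i) (s i)) H0"
    using E_H0 seq_suble \<open>strict_mono r\<close> \<open>strict_mono s\<close> by blast
  then have "tf H0 F2 \<le> F1"
    by (rule tf_le_of_wconv[OF E G G H0_in_Delta_plus F(2,1) _ lim(2,1) lipschitz])
  then show "F2 \<le> F1"
    using \<open>F2 \<in> Delta_plus\<close> by simp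
qed blast

end

section \<open>Probabilistic metric spaces\<close>

lemma pm_cauchy_isometric:
  "(\<And>n p. L (\<phi> (c n)) (\<phi> (c p)) = D (c n) (c p)) \<Longrightarrow> pm_cauchy L (\<lambda>n. \<phi> (c n)) \<longleftrightarrow> pm_cauchy D c"
  by (simp add: pm_cauchy_def)

locale prob_metric_space = continuous_triangle +
  fixes S :: "'a set" and D :: "'a \<Rightarrow> 'a \<Rightarrow> dfun"
  assumes pm_space: "pm_space S D tf"
begin

lemma D_in_Delta_plus: "p \<in> S \<Longrightarrow> q \<in> S \<Longrightarrow> D p q \<in> Delta_plus"
  using pm_space unfolding pm_space_def by (elim conjE) meson

lemma D_eq_H0_iff: "p \<in> S \<Longrightarrow> q \<in> S \<Longrightarrow> D p q = H0 \<longleftrightarrow> p = q"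
  using pm_space unfolding pm_space_def by (elim conjE) blast

lemma D_self [simp]: "p \<in> S \<Longrightarrow> D p p = H0"
  using D_eq_H0_iff by blast

lemma D_commute: "p \<in> S \<Longrightarrow> q \<in> S \<Longrightarrow> D p q = D q p"
  using pm_space unfolding pm_space_def by (elim conjE) meson

lemma D_triangle: "p \<in> S \<Longrightarrow> q \<in> S \<Longrightarrow> r \<in> S \<Longrightarrow> tf (D p q) (D q r) \<le> D p r"
  using pm_space unfolding pm_space_def by (elim conjE) meson

lemma D_triangle3:
  assumes "p \<in> S" "q \<in> S" "r \<in> S" "s \<in> S"
  shows "tf (tf (D p q) (D q r)) (D r s) \<le> D p s"
proof -
  have "tf (tf (D p q) (D q r)) (D r s) \<le> tf (D p r) (D r s)"
    using assms by (intro tf_mono_left tf_closed D_in_Delta_plus D_triangle)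
  also have "\<dots> \<le> D p s"
    using assms by (intro D_triangle)
  finally show ?thesis .
qed

definition cauchy_seq :: "(nat \<Rightarrow> 'a) \<Rightarrow> bool" where
  "cauchy_seq a \<longleftrightarrow> (\<forall>n. a n \<in> S) \<and> pm_cauchy D a"

lemma cauchy_seq_in: "cauchy_seq a \<Longrightarrow> a n \<in> S"
  unfolding cauchy_seq_def by blast

lemma cauchy_seq_iff_double_wconv_H0:
  "(\<And>n. a n \<in> S) \<Longrightarrow> cauchy_seq a \<longleftrightarrow> double_wconv_H0 (\<lambda>n p. D (a n) (a p))"
  unfolding cauchy_seq_def using pm_cauchy_iff_double_wconv_H0[where D = D and z = a] D_in_Delta_plus
  by simp

lemma cauchy_seq_iff_pairs:
  "(\<And>n. a n \<in> S) \<Longrightarrow>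
    cauchy_seq a \<longleftrightarrow> (\<forall>r s. (\<forall>i. i \<le> r i \<and> i \<le> s i) \<longrightarrow> wconv (\<lambda>i. D (a (r i)) (a (s i))) H0)"
  using cauchy_seq_iff_double_wconv_H0 double_wconv_H0_iff_pairs D_in_Delta_plus by simp

lemma cauchy_seq_pairs:
  "cauchy_seq a \<Longrightarrow> \<forall>i. i \<le> r i \<and> i \<le> s i \<Longrightarrow> wconv (\<lambda>i. D (a (r i)) (a (s i))) H0"
  using cauchy_seq_iff_pairs cauchy_seq_in by blast

lemma cauchy_seqI_pairs:
  "(\<And>n. a n \<in> S) \<Longrightarrow> (\<And>r s. \<forall>i. i \<le> r i \<and> i \<le> s i \<Longrightarrow> wconv (\<lambda>i. D (a (r i)) (a (s i))) H0)
    \<Longrightarrow> cauchy_seq a"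
  using cauchy_seq_iff_pairs by blast

lemma cauchy_seq_const: "c \<in> S \<Longrightarrow> cauchy_seq (\<lambda>n. c)"
  by (rule cauchy_seqI_pairs) (simp_all add: wconv_const)

lemma converges_imp_cauchy_seq:
  assumes z: "\<And>n. z n \<in> S" and x: "x \<in> S" and lim: "pm_converges D z x"
  shows "cauchy_seq z"
proof (rule cauchy_seqI_pairs[OF z])
  fix r s :: "nat \<Rightarrow> nat" assume "\<forall>i. i \<le> r i \<and> i \<le> s i"
  then have r: "wconv (\<lambda>i. D (z (r i)) x) H0" and s: "wconv (\<lambda>i. D (z (s i)) x) H0"
    using lim unfolding pm_converges_def by (auto intro: wconv_reindex)
  have "(\<lambda>i. D x (z (s i))) = (\<lambda>i. D (z (s i)) x)"
    using D_commute z x by auto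
  with s have s': "wconv (\<lambda>i. D x (z (s i))) H0"
    by simp
  show "wconv (\<lambda>i. D (z (r i)) (z (s i))) H0"
    by (rule wconv_H0_if_tf_le[OF _ _ _ r s']) (use D_in_Delta_plus D_triangle z x in auto)
qed

lemma wconv_dist_of_converges:
  assumes z: "\<And>n. z n \<in> S" and w: "\<And>n. w n \<in> S" and x: "x \<in> S" and y: "y \<in> S"
    and zx: "pm_converges D z x" and wy: "pm_converges D w y"
  shows "wconv (\<lambda>n. D (z n) (w n)) (D x y)"
proof (rule wconv_if_subseq_limits_eq[OF _ D_in_Delta_plus[OF x y]])
  show "\<And>n. D (z n) (w n) \<in> Delta_plus"
    using D_in_Delta_plus z w by blast
  fix r :: "nat \<Rightarrow> nat" and F assume "strict_mono r" and F: "F \<in> Delta_plus"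
    and lim: "wconv (\<lambda>k. D (z (r k)) (w (r k))) F"
  have "wconv (\<lambda>k. D (z (r k)) x) H0" "wconv (\<lambda>k. D (w (r k)) y) H0"
    using zx wy seq_suble[OF \<open>strict_mono r\<close>] unfolding pm_converges_def by (auto intro: wconv_reindex)
  moreover have "(\<lambda>k. D x (z (r k))) = (\<lambda>k. D (z (r k)) x)" "(\<lambda>k. D y (w (r k))) = (\<lambda>k. D (w (r k)) y)"
    using D_commute z w x y by auto
  ultimately have zr: "wconv (\<lambda>k. D (z (r k)) x) H0" "wconv (\<lambda>k. D x (z (r k))) H0"
    and wr: "wconv (\<lambda>k. D (w (r k)) y) H0" "wconv (\<lambda>k. D y (w (r k))) H0"
    by simp_all
  note Ds = D_in_Delta_plus[OF x y] D_in_Delta_plus[OF z x] D_in_Delta_plus[OF x z]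
    D_in_Delta_plus[OF w y] D_in_Delta_plus[OF y w] D_in_Delta_plus[OF z w]
  have "tf (D x y) H0 \<le> F"
  proof (rule tf_le_of_wconv[OF _ _ _ _ H0_in_Delta_plus F _ wr(2) lim])
    show "wconv (\<lambda>k. tf (D (z (r k)) x) (D x y)) (D x y)"
      using tf_wconv[OF _ _ H0_in_Delta_plus Ds(1) zr(1) wconv_const] Ds by simp
    show "tf (tf (D (z (r k)) x) (D x y)) (D y (w (r k))) \<le> D (z (r k)) (w (r k))" for k
      by (intro D_triangle3 z w x y)
  qed (use Ds tf_closed in auto)
  moreover have "tf F H0 \<le> D x y"
  proof (rule tf_le_of_wconv[OF _ _ _ F H0_in_Delta_plus Ds(1) _ wr(1) wconv_const])
    show "wconv (\<lambda>k. tf (D x (z (r k))) (D (z (r k)) (w (r k)))) F"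
      using tf_wconv[OF _ _ H0_in_Delta_plus F zr(2) lim] Ds F by simp
    show "tf (tf (D x (z (r k))) (D (z (r k)) (w (r k)))) (D (w (r k)) y) \<le> D x y" for k
      by (intro D_triangle3 z w x y)
  qed (use Ds tf_closed in auto)
  ultimately show "F = D x y"
    using F Ds(1) by simp
qed

lemma cauchy_seq_if_close:
  assumes w: "\<And>n. w n \<in> S" and z: "cauchy_seq z" and close: "wconv (\<lambda>n. D (w n) (z n)) H0"
  shows "cauchy_seq w"
proof (rule cauchy_seqI_pairs[OF w])
  fix r s :: "nat \<Rightarrow> nat" assume rs: "\<forall>i. i \<le> r i \<and> i \<le> s i"
  have zS: "\<And>n. z n \<in> S"
    using cauchy_seq_in[OF z] .
  have "(\<lambda>i. D (z (s i)) (w (s i))) = (\<lambda>i. D (w (s i)) (z (s i)))"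
    using D_commute w zS by auto
  then have "wconv (\<lambda>i. D (w (r i)) (z (r i))) H0" "wconv (\<lambda>i. D (z (s i)) (w (s i))) H0"
    using close rs by (auto intro: wconv_reindex)
  then have wz: "wconv (\<lambda>i. tf (D (w (r i)) (z (r i))) (D (z (r i)) (z (s i)))) H0"
    using cauchy_seq_pairs[OF z rs] D_in_Delta_plus w zS by (intro tf_wconv_H0) auto
  show "wconv (\<lambda>i. D (w (r i)) (w (s i))) H0"
    by (rule wconv_H0_if_tf_le[OF _ _ _ wz \<open>wconv (\<lambda>i. D (z (s i)) (w (s i))) H0\<close>])
      (use D_in_Delta_plus w zS tf_closed D_triangle3 in auto)
qed

lemma converges_if_close:
  assumes z: "\<And>n. z n \<in> S" and w: "\<And>n. w n \<in> S" and x: "x \<in> S"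
    and lim: "pm_converges D w x" and close: "wconv (\<lambda>n. D (z n) (w n)) H0"
  shows "pm_converges D z x"
  unfolding pm_converges_def
  by (rule wconv_H0_if_tf_le[OF _ _ _ close lim[unfolded pm_converges_def]])
    (use D_in_Delta_plus D_triangle z w x in auto)

lemma pm_dense_approx:
  assumes "pm_dense S D A" "x \<in> S" "0 < t" "0 < e"
  shows "\<exists>c\<in>A. 1 - e < D c x (ereal t)"
proof -
  obtain z where z: "range z \<subseteq> A" "wconv (\<lambda>n. D (z n) x) H0"
    using assms(1,2) unfolding pm_dense_def pm_converges_def by blast
  have "\<And>n. D (z n) x \<in> Delta_plus"
    using assms(1,2) z(1) D_in_Delta_plus unfolding pm_dense_def by blast
  then have "\<exists>N. \<forall>n\<ge>N. 1 - e < D (z n) x (ereal t)"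
    using z(2) assms(3,4) by (simp add: wconv_H0_iff_eventually)
  then obtain N where "1 - e < D (z N) x (ereal t)"
    by blast
  then show ?thesis
    using z(1) by blast
qed

section \<open>The completion of a probabilistic metric space\<close>

definition dist_lim :: "(nat \<Rightarrow> 'a) \<Rightarrow> 'a \<Rightarrow> dfun" where
  "dist_lim a = (\<lambda>x. if x \<in> S then wlim (\<lambda>n. D (a n) x) else undefined)"

lemma dist_lim_wconv:
  assumes a: "cauchy_seq a" and x: "x \<in> S"
  shows dist_lim_in_Delta_plus: "dist_lim a x \<in> Delta_plus"
    and wconv_dist_lim: "wconv (\<lambda>n. D (a n) x) (dist_lim a x)"
proof -
  have aS: "\<And>n. a n \<in> S"
    using cauchy_seq_in[OF a] .
  obtain F where F: "F \<in> Delta_plus" "wconv (\<lambda>n. D (a n) x) F"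
  proof (rule wconv_exists_if_lipschitz[where E = "\<lambda>n p. D (a n) (a p)"])
    show "tf (D (a n) (a p)) (D (a p) x) \<le> D (a n) x" for n p
      using D_triangle aS x by blast
  qed (use aS x D_in_Delta_plus cauchy_seq_pairs[OF a] in auto)
  moreover have "dist_lim a x = F"
    unfolding dist_lim_def using x wlim_eq[OF F] by simp
  ultimately show "dist_lim a x \<in> Delta_plus" "wconv (\<lambda>n. D (a n) x) (dist_lim a x)"
    by simp_all
qed

lemma dist_lim_outside: "x \<notin> S \<Longrightarrow> dist_lim a x = undefined"
  unfolding dist_lim_def by simp

lemma dist_lim_lipschitz:
  assumes a: "cauchy_seq a" and x: "x \<in> S" and y: "y \<in> S"
  shows "tf (D x y) (dist_lim a y) \<le> dist_lim a x"
proof (rule tf_le_of_wconv[OF _ _ _ _ _ _ wconv_const wconv_dist_lim[OF a y] wconv_dist_lim[OF a x]])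
  fix n
  have "a n \<in> S"
    using cauchy_seq_in[OF a] .
  then show "tf (D x y) (D (a n) y) \<le> D (a n) x"
    using D_triangle[of "a n" y x] D_commute[of x y] tf_commute D_in_Delta_plus x y by metis
qed (use a x y D_in_Delta_plus dist_lim_in_Delta_plus cauchy_seq_in in auto)

lemma dist_lim_in_PiG:
  assumes "cauchy_seq a"
  shows "dist_lim a \<in> PiG S D tf"
proof -
  have "range a \<subseteq> S \<and> pm_cauchy D a \<and> (\<forall>x\<in>S. wconv (\<lambda>n. D (a n) x) (dist_lim a x))"
    using assms wconv_dist_lim unfolding cauchy_seq_def by blast
  then show ?thesis
    unfolding PiG_def prob_lipschitz_def
    using assms dist_lim_outside dist_lim_in_Delta_plus dist_lim_lipschitz by blast
qed

lemma PiG_obtain_dist_lim: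
  assumes "f \<in> PiG S D tf"
  obtains a where "cauchy_seq a" "f = dist_lim a"
proof -
  obtain a where "range a \<subseteq> S" "pm_cauchy D a" and lim: "\<forall>x\<in>S. wconv (\<lambda>n. D (a n) x) (f x)"
    and outside: "\<forall>x. x \<notin> S \<longrightarrow> f x = undefined" and f: "\<forall>x\<in>S. f x \<in> Delta_plus"
    using assms unfolding PiG_def prob_lipschitz_def by blast
  then have a: "cauchy_seq a"
    unfolding cauchy_seq_def by blast
  have "f x = dist_lim a x" for x
    using outside dist_lim_outside f lim wconv_unique[OF _ dist_lim_in_Delta_plus[OF a] _ wconv_dist_lim[OF a]]
    by (cases "x \<in> S") auto
  then show ?thesis
    using that a by blast
qed

lemma dist_lim_diagonal:
  assumes a: "cauchy_seq a"
  shows "wconv (\<lambda>m. dist_lim a (a m)) H0"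
proof -
  have aS: "\<And>n. a n \<in> S"
    using cauchy_seq_in[OF a] .
  have F: "\<And>m. dist_lim a (a m) \<in> Delta_plus"
    using dist_lim_in_Delta_plus[OF a aS] .
  show ?thesis
    unfolding wconv_H0_iff_eventually[OF F]
  proof (intro allI impI)
    fix t e :: real assume "0 < t" "0 < e"
    then obtain N where N: "\<forall>n\<ge>N. \<forall>p\<ge>N. 1 - e / 2 < D (a n) (a p) (ereal (t / 2))"
      using cauchy_seq_iff_double_wconv_H0[OF aS] a
      unfolding double_wconv_H0_def by (meson half_gt_zero)
    have "1 - e / 2 \<le> dist_lim a (a m) (ereal t)" if "N \<le> m" for m
    proof (rule wconv_lower_bound[OF F _ wconv_dist_lim[OF a aS]])
      show "t / 2 < t"
        using \<open>0 < t\<close> by simp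
      show "1 - e / 2 \<le> D (a n) (a m) (ereal (t / 2))" if "N \<le> n" for n
        using N \<open>N \<le> m\<close> that by (simp add: less_imp_le)
    qed (use D_in_Delta_plus aS in auto)
    then show "\<exists>N. \<forall>m\<ge>N. 1 - e < dist_lim a (a m) (ereal t)"
      using \<open>0 < e\<close> by (smt (verit, del_insts) field_sum_of_halves)
  qed
qed

lemma delta_eq_dist_lim_const:
  assumes "c \<in> S"
  shows "delta S D c = dist_lim (\<lambda>n. c)"
proof
  fix x
  show "delta S D c x = dist_lim (\<lambda>n. c) x"
  proof (cases "x \<in> S")
    case True
    then have "D c x = dist_lim (\<lambda>n. c) x"
      using assms cauchy_seq_const
      by (intro wconv_unique[OF D_in_Delta_plus dist_lim_in_Delta_plus wconv_const wconv_dist_lim])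
    then show ?thesis
      using True assms D_commute by (simp add: delta_def)
  qed (simp add: delta_def dist_lim_outside)
qed

lemma delta_in_PiG: "c \<in> S \<Longrightarrow> delta S D c \<in> PiG S D tf"
  by (simp add: delta_eq_dist_lim_const dist_lim_in_PiG cauchy_seq_const)

lemma wconv_dist_pair_exists:
  assumes a: "cauchy_seq a" and b: "cauchy_seq b"
  obtains L where "L \<in> Delta_plus" "wconv (\<lambda>n. D (a n) (b n)) L"
proof (rule wconv_exists_if_lipschitz[where E = "\<lambda>n p. tf (D (a n) (a p)) (D (b p) (b n))"])
  have aS: "\<And>n. a n \<in> S" and bS: "\<And>n. b n \<in> S"
    using cauchy_seq_in a b by blast+
  note D = D_in_Delta_plus[OF aS aS] D_in_Delta_plus[OF aS bS] D_in_Delta_plus[OF bS bS]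
  show "\<And>n. D (a n) (b n) \<in> Delta_plus" "\<And>n p. tf (D (a n) (a p)) (D (b p) (b n)) \<in> Delta_plus"
    using D tf_closed by blast+
  show "wconv (\<lambda>i. tf (D (a (r i)) (a (s i))) (D (b (s i)) (b (r i)))) H0"
    if "\<forall>i. i \<le> r i \<and> i \<le> s i" for r s
    using that cauchy_seq_pairs[OF a] cauchy_seq_pairs[OF b] D by (intro tf_wconv_H0) auto
  fix n p
  have "tf (tf (D (a n) (a p)) (D (b p) (b n))) (D (a p) (b p))
      = tf (tf (D (a n) (a p)) (D (a p) (b p))) (D (b p) (b n))"
    using D by (simp add: tf_right_commute)
  also have "\<dots> \<le> tf (D (a n) (b p)) (D (b p) (b n))"
    using D D_triangle aS bS tf_closed by (intro tf_mono_left) auto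
  also have "\<dots> \<le> D (a n) (b n)"
    using D_triangle aS bS by blast
  finally show "tf (tf (D (a n) (a p)) (D (b p) (b n))) (D (a p) (b p)) \<le> D (a n) (b n)" .
qed blast

lemma tf_dist_lim_le:
  assumes a: "cauchy_seq a" and b: "cauchy_seq b" and x: "x \<in> S"
    and L: "L \<in> Delta_plus" "wconv (\<lambda>n. D (a n) (b n)) L"
  shows "tf (dist_lim a x) (dist_lim b x) \<le> L"
proof (rule tf_le_of_wconv[OF _ _ _ _ _ L(1) wconv_dist_lim[OF a x] wconv_dist_lim[OF b x] L(2)])
  have aS: "\<And>n. a n \<in> S" and bS: "\<And>n. b n \<in> S"
    using cauchy_seq_in a b by blast+
  then show "tf (D (a n) x) (D (b n) x) \<le> D (a n) (b n)" for n
    using D_triangle[OF aS x bS] D_commute[OF bS x] by simp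
qed (use a b x cauchy_seq_in D_in_Delta_plus dist_lim_in_Delta_plus in auto)

text \<open>The lower bound evaluates the supremum at the points b m, where dist_lim b (b m)
  tends to H0.\<close>
lemma DD_dist_lim_eq:
  assumes a: "cauchy_seq a" and b: "cauchy_seq b"
    and L: "L \<in> Delta_plus" "wconv (\<lambda>n. D (a n) (b n)) L"
  shows "DD S tf (dist_lim a) (dist_lim b) = L"
proof -
  have aS: "\<And>n. a n \<in> S" and bS: "\<And>n. b n \<in> S"
    using cauchy_seq_in a b by blast+
  note fa = dist_lim_in_Delta_plus[OF a] and fb = dist_lim_in_Delta_plus[OF b]
  define A where "A = {tf (dist_lim a x) (dist_lim b x) | x. x \<in> S}"
  have A: "A \<subseteq> Delta_plus"
    unfolding A_def using tf_closed fa fb by blast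
  have "dsup A \<le> L"
    using tf_dist_lim_le[OF a b _ L] by (intro dsup_least[OF L(1)]) (auto simp: A_def)
  moreover have "L \<le> dsup A"
  proof (rule wconv_le_bound[OF L(1) _ _ dsup_bounds[OF A]])
    let ?Q = "\<lambda>m. tf (tf (dist_lim a (a m)) (D (a m) (b m))) (dist_lim b (b m))"
    have "wconv ?Q (tf (tf H0 L) H0)"
      using fa fb aS bS D_in_Delta_plus H0_in_Delta_plus L(1) tf_closed
      by (intro tf_wconv[OF _ _ _ _ tf_wconv[OF _ _ _ _ dist_lim_diagonal[OF a] L(2)]
            dist_lim_diagonal[OF b]]) auto
    then show "wconv ?Q L"
      using L(1) by simp
    fix m
    have "tf (dist_lim a (a m)) (D (a m) (b m)) = tf (D (b m) (a m)) (dist_lim a (a m))"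
      using tf_commute fa aS bS D_in_Delta_plus D_commute by metis
    also have "\<dots> \<le> dist_lim a (b m)"
      by (rule dist_lim_lipschitz[OF a bS aS])
    finally have "?Q m \<le> tf (dist_lim a (b m)) (dist_lim b (b m))"
      using fa fb aS bS D_in_Delta_plus tf_closed by (intro tf_mono_left) auto
    also have "\<dots> \<le> dsup A"
      using A bS unfolding A_def by (intro dsup_upper) auto
    finally show "?Q m \<le> dsup A" .
  qed
  ultimately show ?thesis
    unfolding DD_def A_def by simp
qed

lemma DD_dist_lim:
  assumes a: "cauchy_seq a" and b: "cauchy_seq b"
  shows DD_dist_lim_in_Delta_plus: "DD S tf (dist_lim a) (dist_lim b) \<in> Delta_plus"
    and wconv_DD_dist_lim: "wconv (\<lambda>n. D (a n) (b n)) (DD S tf (dist_lim a) (dist_lim b))"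
  using wconv_dist_pair_exists[OF a b] DD_dist_lim_eq[OF a b] by metis+

lemma DD_dist_lim_self: "cauchy_seq a \<Longrightarrow> DD S tf (dist_lim a) (dist_lim a) = H0"
  using DD_dist_lim_eq[OF _ _ H0_in_Delta_plus] cauchy_seq_in by (simp add: wconv_const)

lemma DD_delta_delta: "p \<in> S \<Longrightarrow> q \<in> S \<Longrightarrow> DD S tf (delta S D p) (delta S D q) = D p q"
  by (simp add: delta_eq_dist_lim_const DD_dist_lim_eq cauchy_seq_const D_in_Delta_plus wconv_const)

lemma DD_delta_dist_lim:
  assumes a: "cauchy_seq a" and c: "c \<in> S"
  shows "DD S tf (delta S D c) (dist_lim a) = dist_lim a c"
proof -
  have "(\<lambda>n. D c (a n)) = (\<lambda>n. D (a n) c)"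
    using D_commute cauchy_seq_in[OF a] c by auto
  then show ?thesis
    using wconv_dist_lim[OF a c] dist_lim_in_Delta_plus[OF a c]
    by (simp add: delta_eq_dist_lim_const[OF c] DD_dist_lim_eq[OF cauchy_seq_const[OF c] a])
qed

lemma delta_converges_dist_lim:
  assumes "cauchy_seq a"
  shows "pm_converges (DD S tf) (\<lambda>n. delta S D (a n)) (dist_lim a)"
  using dist_lim_diagonal[OF assms] DD_delta_dist_lim[OF assms cauchy_seq_in[OF assms]]
  unfolding pm_converges_def by simp

lemma DD_dist_lim_commute:
  assumes a: "cauchy_seq a" and b: "cauchy_seq b"
  shows "DD S tf (dist_lim a) (dist_lim b) = DD S tf (dist_lim b) (dist_lim a)"
proof -
  have "(\<lambda>n. D (b n) (a n)) = (\<lambda>n. D (a n) (b n))"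
    using D_commute cauchy_seq_in a b by auto
  then show ?thesis
    using DD_dist_lim_eq[OF b a DD_dist_lim_in_Delta_plus[OF a b]] wconv_DD_dist_lim[OF a b] by simp
qed

lemma dist_lim_le_if_DD_H0:
  assumes a: "cauchy_seq a" and b: "cauchy_seq b" and x: "x \<in> S"
    and H0: "DD S tf (dist_lim b) (dist_lim a) = H0"
  shows "dist_lim a x \<le> dist_lim b x"
proof -
  have aS: "\<And>n. a n \<in> S" and bS: "\<And>n. b n \<in> S"
    using cauchy_seq_in a b by blast+
  have "tf H0 (dist_lim a x) \<le> dist_lim b x"
    using wconv_DD_dist_lim[OF b a] H0 D_triangle[OF bS aS x] D_in_Delta_plus aS bS x
      H0_in_Delta_plus dist_lim_in_Delta_plus a b
    by (intro tf_le_of_wconv[OF _ _ _ _ _ _ _ wconv_dist_lim[OF a x] wconv_dist_lim[OF b x]]) auto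
  then show ?thesis
    using dist_lim_in_Delta_plus[OF a x] by simp
qed

lemma dist_lim_eq_if_DD_H0:
  assumes a: "cauchy_seq a" and b: "cauchy_seq b" and H0: "DD S tf (dist_lim a) (dist_lim b) = H0"
  shows "dist_lim a = dist_lim b"
proof
  fix x
  show "dist_lim a x = dist_lim b x"
  proof (cases "x \<in> S")
    case True
    then show ?thesis
      using dist_lim_le_if_DD_H0[OF a b True] dist_lim_le_if_DD_H0[OF b a True]
        H0 DD_dist_lim_commute[OF a b] by (simp add: order_antisym)
  qed (simp add: dist_lim_outside)
qed

lemma PiG_pm_space: "pm_space (PiG S D tf) (DD S tf) tf"
  unfolding pm_space_def
proof (intro conjI ballI)
  show "triangle_function tf"
    by (rule triangle)
  fix f g assume "f \<in> PiG S D tf" "g \<in> PiG S D tf"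
  then obtain a b where a: "cauchy_seq a" "f = dist_lim a" and b: "cauchy_seq b" "g = dist_lim b"
    by (metis PiG_obtain_dist_lim)
  show "DD S tf f g \<in> Delta_plus"
    using DD_dist_lim_in_Delta_plus[OF a(1) b(1)] a b by simp
  show "DD S tf f g = DD S tf g f"
    using DD_dist_lim_commute[OF a(1) b(1)] a b by simp
  show "DD S tf f g = H0 \<longleftrightarrow> f = g"
    using dist_lim_eq_if_DD_H0[OF a(1) b(1)] DD_dist_lim_self[OF a(1)] a b by auto
next
  fix f g h assume "f \<in> PiG S D tf" "g \<in> PiG S D tf" "h \<in> PiG S D tf"
  then obtain a b c where a: "cauchy_seq a" "f = dist_lim a" and b: "cauchy_seq b" "g = dist_lim b"
    and c: "cauchy_seq c" "h = dist_lim c"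
    by (metis PiG_obtain_dist_lim)
  have "\<And>n. a n \<in> S" "\<And>n. b n \<in> S" "\<And>n. c n \<in> S"
    using cauchy_seq_in a b c by blast+
  then show "tf (DD S tf f g) (DD S tf g h) \<le> DD S tf f h"
    unfolding a b c using D_in_Delta_plus D_triangle a b c DD_dist_lim_in_Delta_plus
    by (intro tf_le_of_wconv[OF _ _ _ _ _ _ wconv_DD_dist_lim wconv_DD_dist_lim wconv_DD_dist_lim]) auto
qed

lemma delta_inj: "inj_on (delta S D) S"
proof (rule inj_onI)
  fix p q assume "p \<in> S" "q \<in> S" and eq: "delta S D p = delta S D q"
  have "D p q = H0"
    using fun_cong[OF eq, of p] \<open>p \<in> S\<close> \<open>q \<in> S\<close> by (simp add: delta_def)
  then show "p = q"
    using D_eq_H0_iff \<open>p \<in> S\<close> \<open>q \<in> S\<close> by blast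
qed

lemma PiG_dense: "pm_dense (PiG S D tf) (DD S tf) (delta S D ` S)"
  unfolding pm_dense_def
proof (intro conjI ballI)
  show "delta S D ` S \<subseteq> PiG S D tf"
    using delta_in_PiG by blast
  fix f assume "f \<in> PiG S D tf"
  then obtain a where a: "cauchy_seq a" "f = dist_lim a"
    by (rule PiG_obtain_dist_lim)
  moreover have "range (\<lambda>n. delta S D (a n)) \<subseteq> delta S D ` S"
    using cauchy_seq_in[OF a(1)] by blast
  ultimately show "\<exists>z. range z \<subseteq> delta S D ` S \<and> pm_converges (DD S tf) z f"
    using delta_converges_dist_lim by blast
qed

text \<open>Approximating z k by delta (c k) within 1/(k+1) yields a Cauchy sequence c in S,
  whose point dist_lim c is the limit of z.\<close>
lemma PiG_complete: "pm_complete (PiG S D tf) (DD S tf)"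
  unfolding pm_complete_def
proof (intro allI impI)
  interpret completion: prob_metric_space tf "PiG S D tf" "DD S tf"
    by unfold_locales (rule PiG_pm_space)
  fix z assume "range z \<subseteq> PiG S D tf \<and> pm_cauchy (DD S tf) z"
  then have zS: "\<And>k. z k \<in> PiG S D tf" and z: "completion.cauchy_seq z"
    unfolding completion.cauchy_seq_def by auto
  have "\<exists>c\<in>S. 1 - 1 / (real k + 1) < DD S tf (delta S D c) (z k) (ereal (1 / (real k + 1)))" for k
    using completion.pm_dense_approx[OF PiG_dense zS, of "1 / (real k + 1)" "1 / (real k + 1)"] by simp
  then obtain c where cS: "\<And>k. c k \<in> S"
    and close: "\<And>k. 1 - 1 / (real k + 1) < DD S tf (delta S D (c k)) (z k) (ereal (1 / (real k + 1)))"
    by metis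
  have dS: "\<And>k. delta S D (c k) \<in> PiG S D tf"
    using delta_in_PiG cS by blast
  have H0: "wconv (\<lambda>k. DD S tf (delta S D (c k)) (z k)) H0"
    by (rule wconv_H0_if_bound[OF completion.D_in_Delta_plus[OF dS zS] close])
  then have "completion.cauchy_seq (\<lambda>k. delta S D (c k))"
    using completion.cauchy_seq_if_close[where w = "\<lambda>k. delta S D (c k)", OF dS z] by blast
  then have c: "cauchy_seq c"
    unfolding cauchy_seq_def completion.cauchy_seq_def
    using pm_cauchy_isometric[of "DD S tf" "delta S D" c D] DD_delta_delta cS by simp
  have "pm_converges (DD S tf) z (dist_lim c)"
  proof (rule completion.converges_if_close[OF zS dS dist_lim_in_PiG[OF c] delta_converges_dist_lim[OF c]])
    show "wconv (\<lambda>k. DD S tf (z k) (delta S D (c k))) H0"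
      using H0 completion.D_commute[OF dS zS] by simp
  qed
  then show "\<exists>f\<in>PiG S D tf. pm_converges (DD S tf) z f"
    using dist_lim_in_PiG[OF c] by blast
qed

end

section \<open>Uniqueness of the completion\<close>

locale pm_dense_isometry = prob_metric_space tf S D + target: prob_metric_space tf X \<Lambda>
  for tf and S :: "'a set" and D and X :: "'b set" and \<Lambda> +
  fixes \<phi> :: "'a \<Rightarrow> 'b"
  assumes target_complete: "pm_complete X \<Lambda>" and phi_into: "\<phi> ` S \<subseteq> X"
    and phi_isometric: "isometric S D \<Lambda> \<phi>" and phi_dense: "pm_dense X \<Lambda> (\<phi> ` S)"
begin

lemma phi_in: "a \<in> S \<Longrightarrow> \<phi> a \<in> X"
  using phi_into by blast

lemma Lambda_phi: "a \<in> S \<Longrightarrow> b \<in> S \<Longrightarrow> \<Lambda> (\<phi> a) (\<phi> b) = D a b"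
  using phi_isometric unfolding isometric_def by blast

lemma phi_cauchy_seq_iff: "(\<And>n. a n \<in> S) \<Longrightarrow> target.cauchy_seq (\<lambda>n. \<phi> (a n)) \<longleftrightarrow> cauchy_seq a"
  unfolding cauchy_seq_def target.cauchy_seq_def
  using pm_cauchy_isometric[of \<Lambda> \<phi> a D] Lambda_phi phi_in by auto

lemma phi_limit_exists:
  assumes "cauchy_seq a"
  obtains x where "x \<in> X" "pm_converges \<Lambda> (\<lambda>n. \<phi> (a n)) x"
proof -
  have "target.cauchy_seq (\<lambda>n. \<phi> (a n))"
    using phi_cauchy_seq_iff[of a] assms cauchy_seq_in by blast
  then have "range (\<lambda>n. \<phi> (a n)) \<subseteq> X \<and> pm_cauchy \<Lambda> (\<lambda>n. \<phi> (a n))"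
    unfolding target.cauchy_seq_def by blast
  then show ?thesis
    using target_complete that unfolding pm_complete_def by blast
qed

lemma Lambda_limits:
  assumes a: "cauchy_seq a" and b: "cauchy_seq b" and "x \<in> X" "y \<in> X"
    and "pm_converges \<Lambda> (\<lambda>n. \<phi> (a n)) x" "pm_converges \<Lambda> (\<lambda>n. \<phi> (b n)) y"
  shows "\<Lambda> x y = DD S tf (dist_lim a) (dist_lim b)"
proof -
  have aS: "\<And>n. a n \<in> S" and bS: "\<And>n. b n \<in> S"
    using cauchy_seq_in a b by blast+
  have "wconv (\<lambda>n. \<Lambda> (\<phi> (a n)) (\<phi> (b n))) (\<Lambda> x y)"
    using assms phi_in aS bS by (intro target.wconv_dist_of_converges) auto
  then have "wconv (\<lambda>n. D (a n) (b n)) (\<Lambda> x y)"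
    using Lambda_phi aS bS by simp
  then show ?thesis
    using DD_dist_lim_eq[OF a b target.D_in_Delta_plus] assms by simp
qed

definition extension :: "('a \<Rightarrow> dfun) \<Rightarrow> 'b" where
  "extension f = (SOME x. x \<in> X \<and> (\<exists>a. cauchy_seq a \<and> f = dist_lim a \<and> pm_converges \<Lambda> (\<lambda>n. \<phi> (a n)) x))"

lemma extension_dist_lim:
  assumes a: "cauchy_seq a" and x: "x \<in> X" and lim: "pm_converges \<Lambda> (\<lambda>n. \<phi> (a n)) x"
  shows "extension (dist_lim a) = x"
proof -
  let ?P = "\<lambda>y. y \<in> X \<and> (\<exists>b. cauchy_seq b \<and> dist_lim a = dist_lim b \<and> pm_converges \<Lambda> (\<lambda>n. \<phi> (b n)) y)"
  have "?P (extension (dist_lim a))"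
    unfolding extension_def by (rule someI[of ?P x]) (use assms in blast)
  then obtain b where y: "extension (dist_lim a) \<in> X" and b: "cauchy_seq b" "dist_lim a = dist_lim b"
    and lim_b: "pm_converges \<Lambda> (\<lambda>n. \<phi> (b n)) (extension (dist_lim a))"
    by blast
  have "\<Lambda> (extension (dist_lim a)) x = DD S tf (dist_lim b) (dist_lim a)"
    by (rule Lambda_limits[OF b(1) a y x lim_b lim])
  also have "\<dots> = H0"
    using DD_dist_lim_self[OF a] b(2) by simp
  finally show ?thesis
    using target.D_eq_H0_iff[OF y x] by simp
qed

lemma extension_PiG:
  assumes "f \<in> PiG S D tf"
  obtains a where "cauchy_seq a" "f = dist_lim a" "extension f \<in> X"
    "pm_converges \<Lambda> (\<lambda>n. \<phi> (a n)) (extension f)"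
proof -
  obtain a where a: "cauchy_seq a" "f = dist_lim a"
    using PiG_obtain_dist_lim[OF assms] .
  moreover obtain x where "x \<in> X" "pm_converges \<Lambda> (\<lambda>n. \<phi> (a n)) x"
    using phi_limit_exists[OF a(1)] .
  ultimately show ?thesis
    using that extension_dist_lim by blast
qed

lemma extension_isometric: "isometric (PiG S D tf) (DD S tf) \<Lambda> extension"
  unfolding isometric_def
proof (intro ballI)
  fix f g assume "f \<in> PiG S D tf" "g \<in> PiG S D tf"
  obtain a where a: "cauchy_seq a" "f = dist_lim a" "extension f \<in> X"
    "pm_converges \<Lambda> (\<lambda>n. \<phi> (a n)) (extension f)"
    using extension_PiG[OF \<open>f \<in> PiG S D tf\<close>] .
  obtain b where b: "cauchy_seq b" "g = dist_lim b" "extension g \<in> X"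
    "pm_converges \<Lambda> (\<lambda>n. \<phi> (b n)) (extension g)"
    using extension_PiG[OF \<open>g \<in> PiG S D tf\<close>] .
  show "\<Lambda> (extension f) (extension g) = DD S tf f g"
    using Lambda_limits[OF a(1) b(1) a(3) b(3) a(4) b(4)] a(2) b(2) by simp
qed

lemma extension_delta: "a \<in> S \<Longrightarrow> extension (delta S D a) = \<phi> a"
  using extension_dist_lim[OF cauchy_seq_const phi_in] phi_in
  by (simp add: delta_eq_dist_lim_const pm_converges_def wconv_const)

lemma extension_bij: "bij_betw extension (PiG S D tf) X"
proof (rule bij_betw_imageI)
  show "inj_on extension (PiG S D tf)"
  proof (rule inj_onI)
    fix f g assume f: "f \<in> PiG S D tf" and g: "g \<in> PiG S D tf" and eq: "extension f = extension g"
    have "DD S tf f g = \<Lambda> (extension f) (extension g)"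
      using extension_isometric f g unfolding isometric_def by simp
    also have "\<dots> = \<Lambda> (extension f) (extension f)"
      using eq by simp
    also have "\<dots> = H0"
      using extension_PiG[OF f] target.D_self by blast
    finally have "DD S tf f g = H0" .
    then show "f = g"
      using PiG_pm_space f g unfolding pm_space_def by blast
  qed
  show "extension ` PiG S D tf = X"
  proof
    show "extension ` PiG S D tf \<subseteq> X"
      using extension_PiG by blast
    show "X \<subseteq> extension ` PiG S D tf"
    proof
      fix x assume x: "x \<in> X"
      obtain z where "range z \<subseteq> \<phi> ` S" and lim: "pm_converges \<Lambda> z x"
        using phi_dense x unfolding pm_dense_def by blast
      then have "\<forall>n. \<exists>c. c \<in> S \<and> z n = \<phi> c"
        by blast
      then obtain c where cS: "\<And>n. c n \<in> S" and z: "z = (\<lambda>n. \<phi> (c n))"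
        by (auto dest!: choice)
      have "target.cauchy_seq z"
        using target.converges_imp_cauchy_seq[OF _ x lim] phi_in cS z by blast
      then have "cauchy_seq c"
        using phi_cauchy_seq_iff[OF cS] z by simp
      then have "extension (dist_lim c) = x" "dist_lim c \<in> PiG S D tf"
        using extension_dist_lim[OF _ x] lim z dist_lim_in_PiG by simp_all
      then show "x \<in> extension ` PiG S D tf"
        by (metis image_eqI)
    qed
  qed
qed

end

context prob_metric_space
begin

lemma completion_universal:
  fixes X :: "'b set"
  assumes "pm_space X \<Lambda> tf" "pm_complete X \<Lambda>" "\<phi> ` S \<subseteq> X" "isometric S D \<Lambda> \<phi>"
    "pm_dense X \<Lambda> (\<phi> ` S)"
  shows "\<exists>T. bij_betw T (PiG S D tf) X \<and> isometric (PiG S D tf) (DD S tf) \<Lambda> T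
    \<and> (\<forall>a\<in>S. T (delta S D a) = \<phi> a)"
proof -
  interpret pm_dense_isometry tf S D X \<Lambda> \<phi>
    using assms by unfold_locales
  show ?thesis
    using extension_bij extension_isometric extension_delta by blast
qed

end

section \<open>Probabilistic metric groups\<close>

lemma PiGroup_simps [simp]:
  "carrier (PiGroup G D tf) = PiG (carrier G) D tf"
  "monoid.mult (PiGroup G D tf) = odot G tf"
  "one (PiGroup G D tf) = delta (carrier G) D \<one>\<^bsub>G\<^esub>"
  by (simp_all add: PiGroup_def)

locale prob_metric_group = continuous_triangle +
  fixes G :: "('a, 'm) monoid_scheme" (structure) and D :: "'a \<Rightarrow> 'a \<Rightarrow> dfun"
  assumes pm_group: "pm_group G D tf"

sublocale prob_metric_group \<subseteq> prob_metric_space tf "carrier G" D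
  using pm_group unfolding pm_group_def by unfold_locales blast

sublocale prob_metric_group \<subseteq> group G
  using pm_group unfolding pm_group_def by blast

context prob_metric_group
begin

lemma D_mult_right: "p \<in> carrier G \<Longrightarrow> q \<in> carrier G \<Longrightarrow> r \<in> carrier G \<Longrightarrow> D (p \<otimes> r) (q \<otimes> r) = D p q"
  using pm_group unfolding pm_group_def by blast

lemma D_mult_left: "p \<in> carrier G \<Longrightarrow> q \<in> carrier G \<Longrightarrow> r \<in> carrier G \<Longrightarrow> D (r \<otimes> p) (r \<otimes> q) = D p q"
  using pm_group unfolding pm_group_def by blast

lemma D_inv:
  assumes p: "p \<in> carrier G" and q: "q \<in> carrier G"
  shows "D (inv p) (inv q) = D q p"
proof -
  have "D (inv p) (inv q) = D (inv p \<otimes> q) (inv q \<otimes> q)"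
    using D_mult_right[of "inv p" "inv q" q] assms by simp
  also have "\<dots> = D (p \<otimes> (inv p \<otimes> q)) (p \<otimes> (inv q \<otimes> q))"
    using D_mult_left[of "inv p \<otimes> q" "inv q \<otimes> q" p] assms by simp
  also have "\<dots> = D q p"
    using assms by (simp add: m_assoc[symmetric])
  finally show ?thesis .
qed

lemma tf_D_le_D_mult:
  assumes "p \<in> carrier G" "p' \<in> carrier G" "q \<in> carrier G" "q' \<in> carrier G"
  shows "tf (D p p') (D q q') \<le> D (p \<otimes> q) (p' \<otimes> q')"
  using D_triangle[of "p \<otimes> q" "p' \<otimes> q" "p' \<otimes> q'"] assms by (simp add: D_mult_left D_mult_right)

lemma cauchy_seq_mult:
  assumes a: "cauchy_seq a" and b: "cauchy_seq b"
  shows "cauchy_seq (\<lambda>n. a n \<otimes> b n)"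
proof (rule cauchy_seqI_pairs)
  have aS: "\<And>n. a n \<in> carrier G" and bS: "\<And>n. b n \<in> carrier G"
    using cauchy_seq_in a b by blast+
  then show "\<And>n. a n \<otimes> b n \<in> carrier G"
    by simp
  fix r s :: "nat \<Rightarrow> nat" assume rs: "\<forall>i. i \<le> r i \<and> i \<le> s i"
  show "wconv (\<lambda>i. D (a (r i) \<otimes> b (r i)) (a (s i) \<otimes> b (s i))) H0"
    by (rule wconv_H0_if_tf_le[OF _ _ _ cauchy_seq_pairs[OF a rs] cauchy_seq_pairs[OF b rs]])
      (use aS bS D_in_Delta_plus tf_D_le_D_mult in auto)
qed

lemma cauchy_seq_inv:
  assumes a: "cauchy_seq a"
  shows "cauchy_seq (\<lambda>n. inv (a n))"
proof (rule cauchy_seqI_pairs)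
  have aS: "\<And>n. a n \<in> carrier G"
    using cauchy_seq_in a by blast
  then show "\<And>n. inv (a n) \<in> carrier G"
    by simp
  fix r s :: "nat \<Rightarrow> nat" assume "\<forall>i. i \<le> r i \<and> i \<le> s i"
  then have "wconv (\<lambda>i. D (a (s i)) (a (r i))) H0"
    using cauchy_seq_pairs[OF a] by blast
  then show "wconv (\<lambda>i. D (inv (a (r i))) (inv (a (s i)))) H0"
    using D_inv aS by simp
qed

lemma converges_mult:
  assumes z: "\<And>n. z n \<in> carrier G" and w: "\<And>n. w n \<in> carrier G"
    and x: "x \<in> carrier G" and y: "y \<in> carrier G"
    and zx: "pm_converges D z x" and wy: "pm_converges D w y"
  shows "pm_converges D (\<lambda>n. z n \<otimes> w n) (x \<otimes> y)"
  unfolding pm_converges_def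
  by (rule wconv_H0_if_tf_le[OF _ _ _ zx[unfolded pm_converges_def] wy[unfolded pm_converges_def]])
    (use z w x y D_in_Delta_plus tf_D_le_D_mult in auto)

lemma tf_dist_lim_le_dist_lim_mult:
  assumes a: "cauchy_seq a" and b: "cauchy_seq b" and y: "y \<in> carrier G" and z: "z \<in> carrier G"
  shows "tf (dist_lim a y) (dist_lim b z) \<le> dist_lim (\<lambda>n. a n \<otimes> b n) (y \<otimes> z)"
proof (rule tf_le_of_wconv[OF _ _ _ _ _ _ wconv_dist_lim[OF a y] wconv_dist_lim[OF b z]
      wconv_dist_lim[OF cauchy_seq_mult[OF a b]]])
  have aS: "\<And>n. a n \<in> carrier G" and bS: "\<And>n. b n \<in> carrier G"
    using cauchy_seq_in a b by blast+
  then show "\<And>n. tf (D (a n) y) (D (b n) z) \<le> D (a n \<otimes> b n) (y \<otimes> z)"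
    using y z by (simp add: tf_D_le_D_mult)
qed (use a b y z cauchy_seq_in D_in_Delta_plus dist_lim_in_Delta_plus cauchy_seq_mult in auto)

lemma tf_dist_lim_mult_le_dist_lim:
  assumes a: "cauchy_seq a" and b: "cauchy_seq b" and x: "x \<in> carrier G" and y: "y \<in> carrier G"
  shows "tf (dist_lim a y) (dist_lim (\<lambda>n. a n \<otimes> b n) x) \<le> dist_lim b (inv y \<otimes> x)"
proof -
  have aS: "\<And>n. a n \<in> carrier G" and bS: "\<And>n. b n \<in> carrier G"
    using cauchy_seq_in a b by blast+
  have "(\<lambda>n. D y (a n)) = (\<lambda>n. D (a n) y)"
    using D_commute aS y by auto
  then have lim_a: "wconv (\<lambda>n. D y (a n)) (dist_lim a y)"
    using wconv_dist_lim[OF a y] by simp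
  have "tf (D y (a n)) (D (a n \<otimes> b n) x) \<le> D (b n) (inv y \<otimes> x)" for n
  proof -
    have "D (b n) (inv y \<otimes> x) = D (y \<otimes> b n) x"
      using D_mult_left[of "b n" "inv y \<otimes> x" y] aS bS x y by (simp add: m_assoc[symmetric])
    moreover have "D (y \<otimes> b n) (a n \<otimes> b n) = D y (a n)"
      using D_mult_right aS bS y by simp
    ultimately show ?thesis
      using D_triangle[of "y \<otimes> b n" "a n \<otimes> b n" x] aS bS x y by simp
  qed
  then show ?thesis
    by (intro tf_le_of_wconv[OF _ _ _ _ _ _ lim_a wconv_dist_lim[OF cauchy_seq_mult[OF a b] x]
          wconv_dist_lim[OF b]])
      (use a b x y aS bS cauchy_seq_mult D_in_Delta_plus dist_lim_in_Delta_plus in auto)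
qed

text \<open>The supremum is evaluated at the factorisations x = a m \<otimes> (inv (a m) \<otimes> x),
  where dist_lim a (a m) tends to H0.\<close>
lemma dist_lim_mult_le_dsup:
  assumes a: "cauchy_seq a" and b: "cauchy_seq b" and x: "x \<in> carrier G"
  defines "B \<equiv> {tf (dist_lim a y) (dist_lim b z) | y z. y \<in> carrier G \<and> z \<in> carrier G \<and> y \<otimes> z = x}"
  shows "dist_lim (\<lambda>n. a n \<otimes> b n) x \<le> dsup B"
proof -
  let ?c = "\<lambda>n. a n \<otimes> b n"
  have aS: "\<And>n. a n \<in> carrier G"
    using cauchy_seq_in a by blast
  have fc: "dist_lim ?c x \<in> Delta_plus"
    using dist_lim_in_Delta_plus[OF cauchy_seq_mult[OF a b] x] .
  note fa = dist_lim_in_Delta_plus[OF a] and fb = dist_lim_in_Delta_plus[OF b]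
  have B: "B \<subseteq> Delta_plus"
    unfolding B_def using tf_closed fa fb by blast
  show ?thesis
  proof (rule wconv_le_bound[OF fc _ _ dsup_bounds[OF B]])
    let ?Q = "\<lambda>m. tf (dist_lim a (a m)) (tf (dist_lim a (a m)) (dist_lim ?c x))"
    have "wconv ?Q (tf H0 (tf H0 (dist_lim ?c x)))"
      using fa aS fc tf_closed H0_in_Delta_plus
      by (intro tf_wconv[OF _ _ _ _ dist_lim_diagonal[OF a]
            tf_wconv[OF _ _ _ _ dist_lim_diagonal[OF a] wconv_const]]) auto
    then show "wconv ?Q (dist_lim ?c x)"
      using fc by simp
    fix m
    have "?Q m \<le> tf (dist_lim a (a m)) (dist_lim b (inv (a m) \<otimes> x))"
      using tf_dist_lim_mult_le_dist_lim[OF a b x aS] fa fb fc aS x tf_closed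
      by (intro tf_mono_right) auto
    also have "\<dots> \<le> dsup B"
    proof (rule dsup_upper[OF B])
      have "a m \<otimes> (inv (a m) \<otimes> x) = x"
        using aS x by (simp add: m_assoc[symmetric])
      then show "tf (dist_lim a (a m)) (dist_lim b (inv (a m) \<otimes> x)) \<in> B"
        unfolding B_def using aS x by blast
    qed
    finally show "?Q m \<le> dsup B" .
  qed
qed

lemma odot_dist_lim:
  assumes a: "cauchy_seq a" and b: "cauchy_seq b"
  shows "odot G tf (dist_lim a) (dist_lim b) = dist_lim (\<lambda>n. a n \<otimes> b n)"
proof
  fix x
  show "odot G tf (dist_lim a) (dist_lim b) x = dist_lim (\<lambda>n. a n \<otimes> b n) x"
  proof (cases "x \<in> carrier G")
    case x: True
    have "dsup {tf (dist_lim a y) (dist_lim b z) | y z. y \<in> carrier G \<and> z \<in> carrier G \<and> y \<otimes> z = x}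
        \<le> dist_lim (\<lambda>n. a n \<otimes> b n) x"
      using tf_dist_lim_le_dist_lim_mult[OF a b] dist_lim_in_Delta_plus[OF cauchy_seq_mult[OF a b] x]
      by (intro dsup_least) auto
    then show ?thesis
      using x dist_lim_mult_le_dsup[OF a b x] unfolding odot_def by simp
  qed (simp add: odot_def dist_lim_outside)
qed

lemma PiGroup_group: "group (PiGroup G D tf)"
proof (rule groupI, unfold PiGroup_simps)
  fix f g assume "f \<in> PiG (carrier G) D tf" "g \<in> PiG (carrier G) D tf"
  then obtain a b where "cauchy_seq a" "f = dist_lim a" "cauchy_seq b" "g = dist_lim b"
    by (metis PiG_obtain_dist_lim)
  then show "odot G tf f g \<in> PiG (carrier G) D tf"
    by (simp add: odot_dist_lim cauchy_seq_mult dist_lim_in_PiG)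
next
  show "delta (carrier G) D \<one> \<in> PiG (carrier G) D tf"
    by (simp add: delta_in_PiG)
next
  fix f g h assume "f \<in> PiG (carrier G) D tf" "g \<in> PiG (carrier G) D tf" "h \<in> PiG (carrier G) D tf"
  then obtain a b c where abc: "cauchy_seq a" "cauchy_seq b" "cauchy_seq c"
    and "f = dist_lim a" "g = dist_lim b" "h = dist_lim c"
    by (metis PiG_obtain_dist_lim)
  moreover have "(\<lambda>n. a n \<otimes> b n \<otimes> c n) = (\<lambda>n. a n \<otimes> (b n \<otimes> c n))"
    using abc cauchy_seq_in by (simp add: m_assoc)
  ultimately show "odot G tf (odot G tf f g) h = odot G tf f (odot G tf g h)"
    by (simp add: odot_dist_lim cauchy_seq_mult)
next
  fix f assume "f \<in> PiG (carrier G) D tf"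
  then obtain a where a: "cauchy_seq a" "f = dist_lim a"
    by (rule PiG_obtain_dist_lim)
  have "(\<lambda>n. \<one> \<otimes> a n) = a" "(\<lambda>n. inv (a n) \<otimes> a n) = (\<lambda>n. \<one>)"
    using cauchy_seq_in[OF a(1)] by auto
  then have "odot G tf (delta (carrier G) D \<one>) f = f"
    and inverse: "odot G tf (dist_lim (\<lambda>n. inv (a n))) f = delta (carrier G) D \<one>"
    using a cauchy_seq_const[of \<one>] cauchy_seq_inv[OF a(1)]
    by (simp_all add: delta_eq_dist_lim_const odot_dist_lim)
  then show "odot G tf (delta (carrier G) D \<one>) f = f"
    "\<exists>g\<in>PiG (carrier G) D tf. odot G tf g f = delta (carrier G) D \<one>"
    using dist_lim_in_PiG[OF cauchy_seq_inv[OF a(1)]] by auto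
qed

lemma PiGroup_pm_group: "pm_group (PiGroup G D tf) (DD (carrier G) tf) tf"
  unfolding pm_group_def PiGroup_simps
proof (intro conjI ballI)
  show "group (PiGroup G D tf)"
    by (rule PiGroup_group)
  show "pm_space (PiG (carrier G) D tf) (DD (carrier G) tf) tf"
    by (rule PiG_pm_space)
  fix f g h assume "f \<in> PiG (carrier G) D tf" "g \<in> PiG (carrier G) D tf" "h \<in> PiG (carrier G) D tf"
  then obtain a b c where abc: "cauchy_seq a" "cauchy_seq b" "cauchy_seq c"
    and fgh: "f = dist_lim a" "g = dist_lim b" "h = dist_lim c"
    by (metis PiG_obtain_dist_lim)
  have aS: "\<And>n. a n \<in> carrier G" and bS: "\<And>n. b n \<in> carrier G" and cS: "\<And>n. c n \<in> carrier G"
    using abc cauchy_seq_in by blast+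
  note lim = wconv_DD_dist_lim[OF abc(1,2)] and Dfg = DD_dist_lim_in_Delta_plus[OF abc(1,2)]
  have "(\<lambda>n. D (a n \<otimes> c n) (b n \<otimes> c n)) = (\<lambda>n. D (a n) (b n))"
    using aS bS cS by (simp add: D_mult_right)
  then have "DD (carrier G) tf (dist_lim (\<lambda>n. a n \<otimes> c n)) (dist_lim (\<lambda>n. b n \<otimes> c n))
      = DD (carrier G) tf f g"
    using DD_dist_lim_eq[OF cauchy_seq_mult[OF abc(1,3)] cauchy_seq_mult[OF abc(2,3)] Dfg] lim fgh
    by simp
  then show "DD (carrier G) tf (odot G tf f h) (odot G tf g h) = DD (carrier G) tf f g"
    using abc fgh by (simp add: odot_dist_lim)
  have "(\<lambda>n. D (c n \<otimes> a n) (c n \<otimes> b n)) = (\<lambda>n. D (a n) (b n))"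
    using aS bS cS by (simp add: D_mult_left)
  then have "DD (carrier G) tf (dist_lim (\<lambda>n. c n \<otimes> a n)) (dist_lim (\<lambda>n. c n \<otimes> b n))
      = DD (carrier G) tf f g"
    using DD_dist_lim_eq[OF cauchy_seq_mult[OF abc(3,1)] cauchy_seq_mult[OF abc(3,2)] Dfg] lim fgh
    by simp
  then show "DD (carrier G) tf (odot G tf h f) (odot G tf h g) = DD (carrier G) tf f g"
    using abc fgh by (simp add: odot_dist_lim)
qed

lemma delta_hom: "delta (carrier G) D \<in> hom G (PiGroup G D tf)"
proof (rule homI)
  show "delta (carrier G) D x \<in> carrier (PiGroup G D tf)" if "x \<in> carrier G" for x
    using that by (simp add: delta_in_PiG)
  show "delta (carrier G) D (x \<otimes> y) = delta (carrier G) D x \<otimes>\<^bsub>PiGroup G D tf\<^esub> delta (carrier G) D y"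
    if "x \<in> carrier G" "y \<in> carrier G" for x y
    using that by (simp add: delta_eq_dist_lim_const odot_dist_lim cauchy_seq_const)
qed

end

locale pm_dense_isometric_hom = prob_metric_group tf G D + target: prob_metric_group tf X \<Lambda>
  for tf and G :: "('a, 'm) monoid_scheme" and D and X :: "('b, 'n) monoid_scheme" and \<Lambda> +
  fixes \<phi> :: "'a \<Rightarrow> 'b"
  assumes target_complete: "pm_complete (carrier X) \<Lambda>" and phi_hom: "\<phi> \<in> hom G X"
    and phi_isometric: "isometric (carrier G) D \<Lambda> \<phi>" and phi_dense: "pm_dense (carrier X) \<Lambda> (\<phi> ` carrier G)"

sublocale pm_dense_isometric_hom \<subseteq> pm_dense_isometry tf "carrier G" D "carrier X" \<Lambda> \<phi>
  using target_complete hom_carrier[OF phi_hom] phi_isometric phi_dense by unfold_locales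

context pm_dense_isometric_hom
begin

lemma extension_mult:
  assumes "f \<in> PiG (carrier G) D tf" "g \<in> PiG (carrier G) D tf"
  shows "extension (odot G tf f g) = extension f \<otimes>\<^bsub>X\<^esub> extension g"
proof -
  obtain a where a: "cauchy_seq a" "f = dist_lim a" "extension f \<in> carrier X"
    "pm_converges \<Lambda> (\<lambda>n. \<phi> (a n)) (extension f)"
    using extension_PiG[OF assms(1)] .
  obtain b where b: "cauchy_seq b" "g = dist_lim b" "extension g \<in> carrier X"
    "pm_converges \<Lambda> (\<lambda>n. \<phi> (b n)) (extension g)"
    using extension_PiG[OF assms(2)] .
  have aS: "\<And>n. a n \<in> carrier G" and bS: "\<And>n. b n \<in> carrier G"
    using a b cauchy_seq_in by blast+
  have "pm_converges \<Lambda> (\<lambda>n. \<phi> (a n) \<otimes>\<^bsub>X\<^esub> \<phi> (b n)) (extension f \<otimes>\<^bsub>X\<^esub> extension g)"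
    using aS bS phi_in a b by (intro target.converges_mult) auto
  moreover have "\<phi> (a n \<otimes>\<^bsub>G\<^esub> b n) = \<phi> (a n) \<otimes>\<^bsub>X\<^esub> \<phi> (b n)" for n
    using hom_mult[OF phi_hom aS bS] .
  ultimately have "extension (dist_lim (\<lambda>n. a n \<otimes>\<^bsub>G\<^esub> b n)) = extension f \<otimes>\<^bsub>X\<^esub> extension g"
    using a(3) b(3) by (intro extension_dist_lim cauchy_seq_mult a b) auto
  then show ?thesis
    using a b by (simp add: odot_dist_lim)
qed

lemma extension_iso: "extension \<in> iso (PiGroup G D tf) X"
  unfolding iso_def
  using extension_bij extension_mult bij_betw_apply[OF extension_bij] by (auto intro!: homI)

end

context prob_metric_group
begin

lemma group_completion_universal:
  fixes X :: "('b, 'n) monoid_scheme"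
  assumes "pm_group X \<Lambda> tf" "pm_complete (carrier X) \<Lambda>" "\<phi> \<in> hom G X"
    "isometric (carrier G) D \<Lambda> \<phi>" "pm_dense (carrier X) \<Lambda> (\<phi> ` carrier G)"
  shows "\<exists>T. T \<in> iso (PiGroup G D tf) X \<and> isometric (PiG (carrier G) D tf) (DD (carrier G) tf) \<Lambda> T
    \<and> (\<forall>a\<in>carrier G. T (delta (carrier G) D a) = \<phi> a)"
proof -
  interpret pm_dense_isometric_hom tf G D X \<Lambda> \<phi>
    using assms by (intro_locales; unfold_locales) (simp_all add: prob_metric_group_axioms_def)
  show ?thesis
    using extension_iso extension_isometric extension_delta by blast
qed

end

lemma prob_metric_spaceI: "pm_space S D tf \<Longrightarrow> continuous_tf tf \<Longrightarrow> prob_metric_space tf S D"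
  by (simp add: prob_metric_space_def prob_metric_space_axioms_def continuous_triangle_def pm_space_def)

lemma prob_metric_groupI: "pm_group G D tf \<Longrightarrow> continuous_tf tf \<Longrightarrow> prob_metric_group tf G D"
  by (simp add: prob_metric_group_def prob_metric_group_axioms_def continuous_triangle_def
      pm_group_def pm_space_def)

theorem mainTheorem13:
  fixes G :: "'a monoid" and D :: "'a \<Rightarrow> 'a \<Rightarrow> dfun" and tf :: "dfun \<Rightarrow> dfun \<Rightarrow> dfun"
  assumes "pm_space (carrier G) D tf" and "continuous_tf tf"
  shows "pm_space (PiG (carrier G) D tf) (DD (carrier G) tf) tf
       \<and> pm_complete (PiG (carrier G) D tf) (DD (carrier G) tf)
       \<and> delta (carrier G) D ` carrier G \<subseteq> PiG (carrier G) D tf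
       \<and> inj_on (delta (carrier G) D) (carrier G)
       \<and> (\<forall>a\<in>carrier G. \<forall>b\<in>carrier G.
            DD (carrier G) tf (delta (carrier G) D a) (delta (carrier G) D b) = D a b)
       \<and> pm_dense (PiG (carrier G) D tf) (DD (carrier G) tf) (delta (carrier G) D ` carrier G)
       \<and> (\<forall>(X :: 'b set) \<Lambda> \<phi>. pm_space X \<Lambda> tf \<and> pm_complete X \<Lambda> \<and> \<phi> ` carrier G \<subseteq> X
            \<and> isometric (carrier G) D \<Lambda> \<phi> \<and> pm_dense X \<Lambda> (\<phi> ` carrier G)
            \<longrightarrow> (\<exists>T. bij_betw T (PiG (carrier G) D tf) X
                   \<and> isometric (PiG (carrier G) D tf) (DD (carrier G) tf) \<Lambda> T
                   \<and> (\<forall>a\<in>carrier G. T (delta (carrier G) D a) = \<phi> a)))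
       \<and> (pm_group G D tf \<longrightarrow>
            pm_group (PiGroup G D tf) (DD (carrier G) tf) tf
          \<and> delta (carrier G) D \<in> hom G (PiGroup G D tf)
          \<and> inj_on (delta (carrier G) D) (carrier G)
          \<and> (\<forall>(X :: 'b monoid) \<Lambda> \<phi>. pm_group X \<Lambda> tf \<and> pm_complete (carrier X) \<Lambda>
               \<and> \<phi> \<in> hom G X \<and> isometric (carrier G) D \<Lambda> \<phi>
               \<and> pm_dense (carrier X) \<Lambda> (\<phi> ` carrier G)
               \<longrightarrow> (\<exists>T. T \<in> iso (PiGroup G D tf) X
                      \<and> isometric (PiG (carrier G) D tf) (DD (carrier G) tf) \<Lambda> T
                      \<and> (\<forall>a\<in>carrier G. T (delta (carrier G) D a) = \<phi> a))))"
  (is "?space \<and> ?complete \<and> ?into \<and> ?inj \<and> ?isometric \<and> ?dense \<and> ?universal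
    \<and> (?pm_group \<longrightarrow> ?group \<and> ?hom \<and> ?inj \<and> ?group_universal)")
proof -
  interpret prob_metric_space tf "carrier G" D
    using prob_metric_spaceI[OF assms] .
  have ?universal
    by (intro allI impI, elim conjE) (rule completion_universal)
  moreover have "?group \<and> ?hom \<and> ?group_universal" if ?pm_group
  proof (intro conjI)
    interpret prob_metric_group tf G D
      using prob_metric_groupI[OF that assms(2)] .
    show ?group ?hom
      by (rule PiGroup_pm_group, rule delta_hom)
    show ?group_universal
      by (intro allI impI, elim conjE) (rule group_completion_universal)
  qed
  ultimately show ?thesis
    using PiG_pm_space PiG_complete delta_in_PiG delta_inj DD_delta_delta PiG_dense by blast
qed

end
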